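(* In the exploration process and with the random variables $M(t,i)$ described in the context, for every $t\in\{0,\dots,n\}$ and every $\lambda>0$, $$\mathbb{P}\Big[M(\tau,i)>-\lambda\ \text{for all }(0,n-a)\le(\tau,i)\le(t,n-a)\Big]\ge 1-\exp\left(-\frac{\lambda^2(1-\hat\pi(t))^3}{2(n\hat\pi(t)+\lambda/3)}\right)$$ and $$\mathbb{P}\Big[M(\tau,i)<\lambda\ \text{for all }(0,n-a)\le(\tau,i)\le(t,n-a)\Big]\ge 1-\exp\left(-\frac{\lambda^2(1-\hat\pi(t))^3}{2(n\hat\pi(t)+\lambda/3)}\right).$$
   Context: Let $r\ge2$, $0<p<1$, and consider the random graph $G(n,p)$ on $[n]$ (each edge independently present with probability $p$). Let the initially infected set be $\mathcal{A}(0)=\{1,\dots,a\}$. Exploration process: set $\mathcal{Z}(0)=\emptyset$. For each step $t=1,\dots,n$: if $\mathcal{A}(t-1)\setminus\mathcal{Z}(t-1)\neq\emptyset$, pick a vertex $u_t$ in it by an arbitrary rule and set $\mathcal{Z}(t)=\mathcal{Z}(t-1)\cup\{u_t\}$; otherwise $\mathcal{Z}(t)=\mathcal{Z}(t-1)$. For $t\ge0$ and $i\in[n-a]$ let $X(t,i)$ be the indicator that vertex $a+i$ has at least $r$ neighbours in $\mathcal{Z}(t)$, and set $\mathcal{A}(t)=\mathcal{A}(0)\cup\{a+i: X(t,i)=1,\ i\in[n-a]\}$. Let $T$ be the smallest $t$ with $\mathcal{A}(t)=\mathcal{Z}(t)$. Let $\hat\pi(t)=\mathbb{P}[\mathrm{Bin}(t,p)\ge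 r]$ and define the random quantity $\pi(t)=\hat\pi(t)$ for $t\le T$ and $\pi(t)=\hat\pi(T)$ for $t>T$. Each step $t\ge1$ is divided into rounds $(t,1),\dots,(t,n-a)$, ordered lexicographically ($(\tau,\iota)<(t,i)$ iff $\tau<t$, or $\tau=t$ and $\iota<i$), preceded by $(0,n-a)$. For $(t,i)\ge(0,n-a)$ define $$M(t,i):=\sum_{j=1}^{i}\frac{X(t,j)-\pi(t)}{1-\pi(t)}+\sum_{j=i+1}^{n-a}\frac{X(t-1,j)-\pi(t-1)}{1-\pi(t-1)}.$$ *)

theory Defs
  imports "HOL-Probability.Probability"
begin

text \<open>A graph on the vertex set [n] = {1..n} is encoded by a function on ordered
  pairs; only the slots (u,v) with 1 <= u < v <= n are relevant (the others are False
  almost surely).\<close>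

type_synonym graph = "nat \<times> nat \<Rightarrow> bool"

definition edge_slots :: "nat \<Rightarrow> (nat \<times> nat) set" where
  "edge_slots n = {(u, v). 1 \<le> u \<and> u < v \<and> v \<le> n}"

definition gnp :: "nat \<Rightarrow> real \<Rightarrow> graph pmf" where
  "gnp n p = Pi_pmf (edge_slots n) False (\<lambda>_. bernoulli_pmf p)"

definition adj :: "graph \<Rightarrow> nat \<Rightarrow> nat \<Rightarrow> bool" where
  "adj G u v = (if u < v then G (u, v) else if v < u then G (v, u) else False)"

definition Aset :: "nat \<Rightarrow> nat \<Rightarrow> nat \<Rightarrow> graph \<Rightarrow> nat list \<Rightarrow> nat set" where
  "Aset n a r G zs = {1..a} \<union>
     {a + i | i. i \<in> {1..n - a} \<and> r \<le> card {v \<in> set zs. adj G (a + i) v}}"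

text \<open>The selection rule sel receives the history of explored vertices and the
  candidate set A(t-1) - Z(t-1), and returns an element of it.\<close>
fun zseq :: "nat \<Rightarrow> nat \<Rightarrow> nat \<Rightarrow> (nat list \<Rightarrow> nat set \<Rightarrow> nat) \<Rightarrow> graph \<Rightarrow> nat \<Rightarrow> nat list" where
  "zseq n a r sel G 0 = []"
| "zseq n a r sel G (Suc t) =
     (let zs = zseq n a r sel G t; C = Aset n a r G zs - set zs
      in if C = {} then zs else zs @ [sel zs C])"

definition Zset :: "nat \<Rightarrow> nat \<Rightarrow> nat \<Rightarrow> (nat list \<Rightarrow> nat set \<Rightarrow> nat) \<Rightarrow> graph \<Rightarrow> nat \<Rightarrow> nat set" where
  "Zset n a r sel G t = set (zseq n a r sel G t)"

definition Aproc :: "nat \<Rightarrow> nat \<Rightarrow> nat \<Rightarrow> (nat list \<Rightarrow> nat set \<Rightarrow> nat) \<Rightarrow> graph \<Rightarrow> nat \<Rightarrow> nat set" where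
  "Aproc n a r sel G t = Aset n a r G (zseq n a r sel G t)"

definition Xind :: "nat \<Rightarrow> nat \<Rightarrow> nat \<Rightarrow> (nat list \<Rightarrow> nat set \<Rightarrow> nat) \<Rightarrow> graph \<Rightarrow> nat \<Rightarrow> nat \<Rightarrow> real" where
  "Xind n a r sel G t i = of_bool (r \<le> card {v \<in> Zset n a r sel G t. adj G (a + i) v})"

definition Tstop :: "nat \<Rightarrow> nat \<Rightarrow> nat \<Rightarrow> (nat list \<Rightarrow> nat set \<Rightarrow> nat) \<Rightarrow> graph \<Rightarrow> nat" where
  "Tstop n a r sel G = (LEAST t. Aproc n a r sel G t = Zset n a r sel G t)"

definition pihat :: "real \<Rightarrow> nat \<Rightarrow> nat \<Rightarrow> real" where
  "pihat p r t = measure_pmf.prob (binomial_pmf t p) {k. r \<le> k}"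

definition piproc :: "nat \<Rightarrow> nat \<Rightarrow> nat \<Rightarrow> (nat list \<Rightarrow> nat set \<Rightarrow> nat) \<Rightarrow> real \<Rightarrow> graph \<Rightarrow> nat \<Rightarrow> real" where
  "piproc n a r sel p G t = pihat p r (min t (Tstop n a r sel G))"

text \<open>M(t,i); only used for rounds (t,i) >= (0,n-a).\<close>
definition Mart :: "nat \<Rightarrow> nat \<Rightarrow> nat \<Rightarrow> (nat list \<Rightarrow> nat set \<Rightarrow> nat) \<Rightarrow> real \<Rightarrow> graph \<Rightarrow> nat \<Rightarrow> nat \<Rightarrow> real" where
  "Mart n a r sel p G t i =
     (\<Sum>j = 1..i. (Xind n a r sel G t j - piproc n a r sel p G t) / (1 - piproc n a r sel p G t))
   + (\<Sum>j = i + 1..n - a. (Xind n a r sel G (t - 1) j - piproc n a r sel p G (t - 1))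
                            / (1 - piproc n a r sel p G (t - 1)))"

text \<open>Rounds (tau,i) with (0,n-a) <= (tau,i) <= (t,n-a) in lexicographic order.\<close>
definition round_in :: "nat \<Rightarrow> nat \<Rightarrow> nat \<Rightarrow> nat \<Rightarrow> nat \<Rightarrow> bool" where
  "round_in n a t \<tau> i \<longleftrightarrow>
     (\<tau> = 0 \<and> i = n - a) \<or> (1 \<le> \<tau> \<and> \<tau> \<le> t \<and> 1 \<le> i \<and> i \<le> n - a)"

end

theory Submission
  imports Defs
begin

text \<open>In round (\<tau>, i) the only new information is whether the uninfected vertex w = a + i has
  at least r neighbours in Z(\<tau>). As long as w has fewer than r neighbours in Z(\<tau> - 1), its edges
  have not influenced the exploration, so G(n,p) factors into the edges at w and the rest, and the
  edges from w to Z(\<tau>) are still fresh. Hence the increment of M in that round has conditional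
  mean 0, conditional variance at most (pihat(\<tau>) - pihat(\<tau> - 1)) / (1 - pihat(t))^3 and absolute
  value at most 1 / (1 - pihat(t))^3. The variances telescope to at most
  n pihat(t) / (1 - pihat(t))^3, and Freedman's inequality for martingales with bounded
  increments gives both tail bounds.\<close>

section \<open>Exponential moments and Freedman's inequality\<close>

lemma exp_le_quadratic_nonpos:
  fixes x :: real assumes "x \<le> 0"
  shows "exp x \<le> 1 + x + x\<^sup>2 / 2"
proof -
  obtain t where t: "exp x = (\<Sum>m<3. (x ^ m) / fact m) + (exp t / fact 3) * x ^ 3"
    using Maclaurin_exp_le[of x 3] by blast
  have "x ^ 3 \<le> 0" using assms by (simp add: power_le_zero_eq)
  hence "exp t * x ^ 3 \<le> 0" by (intro mult_nonneg_nonpos) simp_all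
  hence "(exp t / fact 3) * x ^ 3 \<le> 0" by (simp add: divide_nonpos_pos)
  moreover have "(\<Sum>m<3. (x ^ m) / fact m) = 1 + x + x\<^sup>2 / 2"
    by (simp add: eval_nat_numeral fact_numeral)
  ultimately show ?thesis using t by linarith
qed

text \<open>Comparing the tail of the exponential series with a geometric series of ratio x/3,
  since 2 * 3^k \<le> (k+2)!.\<close>
lemma exp_le_quadratic_nonneg:
  fixes x :: real assumes x: "0 \<le> x" "x < 3"
  shows "exp x \<le> 1 + x + x\<^sup>2 / (2 * (1 - x / 3))"
proof -
  have geom: "(\<lambda>k. x\<^sup>2 / 2 * (x/3) ^ k) sums (x\<^sup>2 / 2 * (1 / (1 - x/3)))"
    using x by (intro sums_mult geometric_sums) simp
  have term_le: "inverse (fact (k + 2)) * x ^ (k + 2) \<le> x\<^sup>2 / 2 * (x/3) ^ k" for k :: nat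
  proof -
    have "(2::nat) * 3 ^ k \<le> fact (k + 2)"
      by (induct k) simp_all
    then have "real ((2::nat) * 3 ^ k) \<le> real_of_nat (fact (k + 2))"
      by (simp only: of_nat_le_iff)
    then have "(2::real) * 3 ^ k \<le> fact (k + 2)"
      unfolding of_nat_fact by simp
    then have "inverse (fact (k + 2)) \<le> inverse ((2::real) * 3 ^ k)"
      by (rule le_imp_inverse_le) simp
    then have "inverse (fact (k + 2)) * (x ^ k * x\<^sup>2) \<le> inverse ((2::real) * 3 ^ k) * (x ^ k * x\<^sup>2)"
      by (rule mult_right_mono) (simp add: x)
    also have "\<dots> = x\<^sup>2 / 2 * (x/3) ^ k"
      by (simp add: power_divide field_simps)
    finally show ?thesis
      unfolding power_add by (simp add: ac_simps del: fact_Suc)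
  qed
  have "(\<Sum>k. inverse (fact (k + 2)) * x ^ (k + 2)) \<le> (\<Sum>k. x\<^sup>2 / 2 * (x/3) ^ k)"
    using summable_exp[THEN summable_ignore_initial_segment] sums_summable[OF geom]
    by (intro suminf_le term_le)
  also have "\<dots> = x\<^sup>2 / (2 * (1 - x / 3))"
    using sums_unique[OF geom] x by (simp add: field_simps)
  finally show ?thesis
    unfolding exp_first_two_terms by auto
qed

lemma exp_le_quadratic:
  fixes x c :: real assumes "x \<le> c" "0 \<le> c" "c < 3"
  shows "exp x \<le> 1 + x + x\<^sup>2 / (2 * (1 - c / 3))"
proof (cases "x \<le> 0")
  case True
  have "x\<^sup>2 / 2 \<le> x\<^sup>2 / (2 * (1 - c / 3))"
    using assms by (intro divide_left_mono) (auto simp: field_simps)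
  thus ?thesis using exp_le_quadratic_nonpos[OF True] by linarith
next
  case False
  have "x\<^sup>2 / (2 * (1 - x / 3)) \<le> x\<^sup>2 / (2 * (1 - c / 3))"
    using assms False by (intro divide_left_mono) (auto intro: mult_pos_pos)
  thus ?thesis using exp_le_quadratic_nonneg[of x] False assms by linarith
qed

lemma weighted_exp_moment_le:
  fixes F :: "'a set" and w D :: "'a \<Rightarrow> real"
  assumes "finite F" and w: "\<And>\<omega>. \<omega> \<in> F \<Longrightarrow> 0 \<le> w \<omega>"
    and mean: "(\<Sum>\<omega>\<in>F. w \<omega> * D \<omega>) = 0"
    and var: "(\<Sum>\<omega>\<in>F. w \<omega> * (D \<omega>)\<^sup>2) \<le> v * (\<Sum>\<omega>\<in>F. w \<omega>)"
    and bnd: "\<And>\<omega>. \<omega> \<in> F \<Longrightarrow> \<theta> * D \<omega> \<le> c" and c: "0 \<le> c" "c < 3"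
  shows "(\<Sum>\<omega>\<in>F. w \<omega> * exp (\<theta> * D \<omega>)) \<le> exp (\<theta>\<^sup>2 * v / (2 * (1 - c/3))) * (\<Sum>\<omega>\<in>F. w \<omega>)"
proof -
  define k where "k = 2 * (1 - c/3)"
  have "k > 0" using c by (simp add: k_def)
  have "(\<Sum>\<omega>\<in>F. w \<omega> * exp (\<theta> * D \<omega>)) \<le> (\<Sum>\<omega>\<in>F. w \<omega> * (1 + \<theta> * D \<omega> + (\<theta> * D \<omega>)\<^sup>2 / k))"
    unfolding k_def using w bnd c by (intro sum_mono mult_left_mono exp_le_quadratic) auto
  also have "\<dots> = (\<Sum>\<omega>\<in>F. w \<omega>) + \<theta> * (\<Sum>\<omega>\<in>F. w \<omega> * D \<omega>) + \<theta>\<^sup>2 / k * (\<Sum>\<omega>\<in>F. w \<omega> * (D \<omega>)\<^sup>2)"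
    by (simp add: sum.distrib sum_distrib_left algebra_simps power_mult_distrib)
  also have "\<dots> \<le> (1 + \<theta>\<^sup>2 * v / k) * (\<Sum>\<omega>\<in>F. w \<omega>)"
    using mean mult_left_mono[OF var, of "\<theta>\<^sup>2 / k"] \<open>k > 0\<close> by (simp add: algebra_simps)
  also have "\<dots> \<le> exp (\<theta>\<^sup>2 * v / k) * (\<Sum>\<omega>\<in>F. w \<omega>)"
    using w by (intro mult_right_mono sum_nonneg) (auto simp: add.commute)
  finally show ?thesis by (simp add: k_def)
qed

definition stopped_incr :: "real \<Rightarrow> (nat \<Rightarrow> real) \<Rightarrow> nat \<Rightarrow> real" where
  "stopped_incr lam d l = (if \<forall>m\<in>{1..<l}. (\<Sum>j=1..m. d j) < lam then d l else 0)"

lemma level_le_stopped_sum: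
  assumes "m \<in> {1..K}" "lam \<le> (\<Sum>j=1..m. d j)"
  shows "lam \<le> (\<Sum>l=1..K. stopped_incr lam d l)"
proof -
  define P where "P m \<longleftrightarrow> m \<in> {1..K} \<and> lam \<le> (\<Sum>j=1..m. d j)" for m
  define m0 where "m0 = (LEAST m. P m)"
  have m0: "m0 \<in> {1..K}" "lam \<le> (\<Sum>j=1..m0. d j)"
    using LeastI[of P m] assms unfolding m0_def P_def by auto
  have below: "(\<Sum>j=1..m'. d j) < lam" if "m' \<in> {1..K}" "m' < m0" for m'
    using not_less_Least[of m' P] that unfolding m0_def P_def by auto
  have "(\<Sum>l=1..K. stopped_incr lam d l)
      = (\<Sum>l=1..m0. stopped_incr lam d l) + (\<Sum>l=Suc m0..K. stopped_incr lam d l)"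
  proof -
    have "{1..K} = {1..m0} \<union> {Suc m0..K}" using m0 by auto
    thus ?thesis by (simp add: sum.union_disjoint)
  qed
  also have "(\<Sum>l=Suc m0..K. stopped_incr lam d l) = 0"
  proof (intro sum.neutral ballI)
    fix l assume "l \<in> {Suc m0..K}"
    hence "m0 \<in> {1..<l}" using m0 by auto
    hence "\<not> (\<forall>m\<in>{1..<l}. (\<Sum>j=1..m. d j) < lam)" using m0 by (meson not_less)
    thus "stopped_incr lam d l = 0" unfolding stopped_incr_def by (rule if_not_P)
  qed
  also have "(\<Sum>l=1..m0. stopped_incr lam d l) = (\<Sum>j=1..m0. d j)"
    using below m0 by (intro sum.cong refl) (auto simp: stopped_incr_def)
  finally show ?thesis using m0 by simp
qed

text \<open>The atoms of \<psi> k play the role of the sigma-algebra F_(k-1); the k-th increment has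
  conditional mean 0 and conditional variance at most v k.\<close>
locale weighted_martingale =
  fixes \<Omega> :: "'a set" and w :: "'a \<Rightarrow> real" and K :: nat
    and \<psi> :: "nat \<Rightarrow> 'a \<Rightarrow> 'b" and D :: "nat \<Rightarrow> 'a \<Rightarrow> real" and v :: "nat \<Rightarrow> real" and b :: real
  assumes finite_space: "finite \<Omega>"
    and weight_nonneg: "\<And>\<omega>. \<omega> \<in> \<Omega> \<Longrightarrow> 0 \<le> w \<omega>"
    and adapted: "\<And>k l \<omega> \<omega>'. k \<in> {1..K} \<Longrightarrow> 1 \<le> l \<Longrightarrow> l < k \<Longrightarrow> \<omega> \<in> \<Omega> \<Longrightarrow> \<omega>' \<in> \<Omega>
                    \<Longrightarrow> \<psi> k \<omega> = \<psi> k \<omega>' \<Longrightarrow> D l \<omega> = D l \<omega>'"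
    and cond_mean_zero: "\<And>k y. k \<in> {1..K} \<Longrightarrow> (\<Sum>\<omega>\<in>{\<omega>\<in>\<Omega>. \<psi> k \<omega> = y}. w \<omega> * D k \<omega>) = 0"
    and cond_var_le: "\<And>k y. k \<in> {1..K} \<Longrightarrow>
          (\<Sum>\<omega>\<in>{\<omega>\<in>\<Omega>. \<psi> k \<omega> = y}. w \<omega> * (D k \<omega>)\<^sup>2) \<le> v k * (\<Sum>\<omega>\<in>{\<omega>\<in>\<Omega>. \<psi> k \<omega> = y}. w \<omega>)"
    and incr_le: "\<And>k \<omega>. k \<in> {1..K} \<Longrightarrow> \<omega> \<in> \<Omega> \<Longrightarrow> D k \<omega> \<le> b"
    and var_nonneg: "\<And>k. 0 \<le> v k"
    and b_pos: "0 < b"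
begin

abbreviation fiber :: "nat \<Rightarrow> 'b \<Rightarrow> 'a set" where
  "fiber k y \<equiv> {\<omega>\<in>\<Omega>. \<psi> k \<omega> = y}"

abbreviation stopped_sum :: "real \<Rightarrow> nat \<Rightarrow> 'a \<Rightarrow> real" where
  "stopped_sum lam k \<omega> \<equiv> \<Sum>l=1..k. stopped_incr lam (\<lambda>j. D j \<omega>) l"

lemma stopped_incr_adapted:
  assumes "k \<in> {1..K}" "l \<le> k" "\<omega> \<in> \<Omega>" "\<omega>' \<in> \<Omega>" "\<psi> k \<omega> = \<psi> k \<omega>'"
  shows "(\<forall>m\<in>{1..<l}. (\<Sum>j=1..m. D j \<omega>) < lam) \<longleftrightarrow> (\<forall>m\<in>{1..<l}. (\<Sum>j=1..m. D j \<omega>') < lam)"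
    and "1 \<le> l \<Longrightarrow> l < k \<Longrightarrow> stopped_incr lam (\<lambda>j. D j \<omega>) l = stopped_incr lam (\<lambda>j. D j \<omega>') l"
proof -
  have "(\<Sum>j=1..m. D j \<omega>) = (\<Sum>j=1..m. D j \<omega>')" if "m < k" for m
    using assms that by (intro sum.cong refl adapted[of k]) auto
  then show "(\<forall>m\<in>{1..<l}. (\<Sum>j=1..m. D j \<omega>) < lam) \<longleftrightarrow> (\<forall>m\<in>{1..<l}. (\<Sum>j=1..m. D j \<omega>') < lam)"
    using assms(2) by auto
  then show "1 \<le> l \<Longrightarrow> l < k \<Longrightarrow> stopped_incr lam (\<lambda>j. D j \<omega>) l = stopped_incr lam (\<lambda>j. D j \<omega>') l"
    using assms adapted[of k l \<omega> \<omega>'] by (auto simp: stopped_incr_def)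
qed

lemma fiber_exp_moment_stopped_incr:
  assumes k: "k \<in> {1..K}" and \<theta>: "0 < \<theta>" "\<theta> * b < 3"
  shows "(\<Sum>\<omega>\<in>fiber k y. w \<omega> * exp (\<theta> * stopped_incr lam (\<lambda>j. D j \<omega>) k))
           \<le> exp (\<theta>\<^sup>2 * v k / (2 * (1 - \<theta> * b / 3))) * (\<Sum>\<omega>\<in>fiber k y. w \<omega>)"
proof (cases "fiber k y = {}")
  case True
  then show ?thesis by (simp only: sum.empty mult_zero_right order.refl)
next
  case False
  then obtain \<omega>0 where \<omega>0: "\<omega>0 \<in> fiber k y" by blast
  have fin: "finite (fiber k y)" using finite_space by simp
  have w: "\<And>\<omega>. \<omega> \<in> fiber k y \<Longrightarrow> 0 \<le> w \<omega>" using weight_nonneg by auto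
  have "1 \<le> exp (\<theta>\<^sup>2 * v k / (2 * (1 - \<theta> * b / 3)))"
    using \<theta> var_nonneg[of k] by simp
  then have stopped: "(\<Sum>\<omega>\<in>fiber k y. w \<omega>) \<le> exp (\<theta>\<^sup>2 * v k / (2 * (1 - \<theta> * b / 3))) * (\<Sum>\<omega>\<in>fiber k y. w \<omega>)"
    using sum_nonneg[of "fiber k y" w] w by (simp add: mult_le_cancel_right1)
  have running: "(\<Sum>\<omega>\<in>fiber k y. w \<omega> * exp (\<theta> * D k \<omega>))
           \<le> exp (\<theta>\<^sup>2 * v k / (2 * (1 - \<theta> * b / 3))) * (\<Sum>\<omega>\<in>fiber k y. w \<omega>)"
  proof (rule weighted_exp_moment_le[OF fin w cond_mean_zero[OF k] cond_var_le[OF k]])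
    show "\<theta> * D k \<omega> \<le> \<theta> * b" if "\<omega> \<in> fiber k y" for \<omega>
      using incr_le[OF k, of \<omega>] that \<theta> by (auto intro: mult_left_mono)
  qed (use \<theta> b_pos in auto)
  show ?thesis
  proof (cases "\<forall>m\<in>{1..<k}. (\<Sum>j=1..m. D j \<omega>0) < lam")
    case True
    then have "stopped_incr lam (\<lambda>j. D j \<omega>) k = D k \<omega>" if "\<omega> \<in> fiber k y" for \<omega>
      using stopped_incr_adapted(1)[OF k order.refl, of \<omega> \<omega>0] that \<omega>0 by (simp add: stopped_incr_def)
    then show ?thesis using running by (metis (no_types, lifting) sum.cong)
  next
    case False
    have "stopped_incr lam (\<lambda>j. D j \<omega>) k = 0" if "\<omega> \<in> fiber k y" for \<omega>
    proof -
      have "\<not> (\<forall>m\<in>{1..<k}. (\<Sum>j=1..m. D j \<omega>) < lam)"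
        using False stopped_incr_adapted(1)[OF k order.refl, of \<omega> \<omega>0 lam] that \<omega>0 by simp
      then show ?thesis unfolding stopped_incr_def by (rule if_not_P)
    qed
    then show ?thesis using stopped by simp
  qed
qed

lemma exp_moment_stopped_sum:
  assumes \<theta>: "0 < \<theta>" "\<theta> * b < 3" and "k \<le> K"
  shows "(\<Sum>\<omega>\<in>\<Omega>. w \<omega> * exp (\<theta> * stopped_sum lam k \<omega>))
           \<le> exp (\<theta>\<^sup>2 * (\<Sum>l=1..k. v l) / (2 * (1 - \<theta> * b / 3))) * (\<Sum>\<omega>\<in>\<Omega>. w \<omega>)"
  using \<open>k \<le> K\<close>
proof (induction k)
  case (Suc k)
  define \<kappa> where "\<kappa> = 2 * (1 - \<theta> * b / 3)"
  have k: "Suc k \<in> {1..K}" using Suc by auto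
  let ?g = "\<lambda>\<omega>. w \<omega> * exp (\<theta> * stopped_incr lam (\<lambda>j. D j \<omega>) (Suc k))"
  \<comment> \<open>the stopped sum up to k is constant on each fiber of \<psi> (Suc k)\<close>
  have on_fiber: "(\<Sum>\<omega>\<in>fiber (Suc k) y. exp (\<theta> * stopped_sum lam k \<omega>) * ?g \<omega>)
      \<le> exp (\<theta>\<^sup>2 * v (Suc k) / \<kappa>) * (\<Sum>\<omega>\<in>fiber (Suc k) y. w \<omega> * exp (\<theta> * stopped_sum lam k \<omega>))" for y
  proof (cases "fiber (Suc k) y = {}")
    case True
    then show ?thesis by (simp only: sum.empty mult_zero_right order.refl)
  next
    case False
    then obtain \<omega>0 where \<omega>0: "\<omega>0 \<in> fiber (Suc k) y" by blast
    have const: "stopped_sum lam k \<omega> = stopped_sum lam k \<omega>0" if "\<omega> \<in> fiber (Suc k) y" for \<omega>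
      using that \<omega>0 by (intro sum.cong refl stopped_incr_adapted(2)[OF k]) auto
    have "(\<Sum>\<omega>\<in>fiber (Suc k) y. exp (\<theta> * stopped_sum lam k \<omega>) * ?g \<omega>)
        = exp (\<theta> * stopped_sum lam k \<omega>0) * (\<Sum>\<omega>\<in>fiber (Suc k) y. ?g \<omega>)"
      using const by (simp add: sum_distrib_left)
    also have "\<dots> \<le> exp (\<theta> * stopped_sum lam k \<omega>0) * (exp (\<theta>\<^sup>2 * v (Suc k) / \<kappa>) * (\<Sum>\<omega>\<in>fiber (Suc k) y. w \<omega>))"
      unfolding \<kappa>_def by (intro mult_left_mono fiber_exp_moment_stopped_incr[OF k \<theta>]) simp
    also have "\<dots> = exp (\<theta>\<^sup>2 * v (Suc k) / \<kappa>) * (\<Sum>\<omega>\<in>fiber (Suc k) y. w \<omega> * exp (\<theta> * stopped_sum lam k \<omega>))"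
      using const by (simp add: sum_distrib_left sum_distrib_right mult_ac)
    finally show ?thesis .
  qed
  have "(\<Sum>\<omega>\<in>\<Omega>. w \<omega> * exp (\<theta> * stopped_sum lam (Suc k) \<omega>))
      = (\<Sum>y\<in>\<psi> (Suc k) ` \<Omega>. \<Sum>\<omega>\<in>fiber (Suc k) y. exp (\<theta> * stopped_sum lam k \<omega>) * ?g \<omega>)"
    by (subst sum.image_gen[OF finite_space]) (simp add: distrib_left exp_add mult_ac)
  also have "\<dots> \<le> (\<Sum>y\<in>\<psi> (Suc k) ` \<Omega>. exp (\<theta>\<^sup>2 * v (Suc k) / \<kappa>) *
                     (\<Sum>\<omega>\<in>fiber (Suc k) y. w \<omega> * exp (\<theta> * stopped_sum lam k \<omega>)))"
    by (intro sum_mono on_fiber)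
  also have "\<dots> = exp (\<theta>\<^sup>2 * v (Suc k) / \<kappa>) * (\<Sum>\<omega>\<in>\<Omega>. w \<omega> * exp (\<theta> * stopped_sum lam k \<omega>))"
    by (simp add: sum_distrib_left[symmetric] sum.image_gen[OF finite_space, symmetric])
  also have "\<dots> \<le> exp (\<theta>\<^sup>2 * v (Suc k) / \<kappa>) * (exp (\<theta>\<^sup>2 * (\<Sum>l=1..k. v l) / \<kappa>) * (\<Sum>\<omega>\<in>\<Omega>. w \<omega>))"
    using Suc by (intro mult_left_mono) (auto simp: \<kappa>_def)
  also have "\<dots> = exp (\<theta>\<^sup>2 * (\<Sum>l=1..Suc k. v l) / \<kappa>) * (\<Sum>\<omega>\<in>\<Omega>. w \<omega>)"
    by (simp add: exp_add[symmetric] add_divide_distrib distrib_left add.commute)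
  finally show ?case by (simp add: \<kappa>_def)
qed simp

lemma level_crossing_weight_le:
  assumes \<theta>: "0 < \<theta>" "\<theta> * b < 3"
  shows "(\<Sum>\<omega>\<in>{\<omega>\<in>\<Omega>. \<exists>m\<in>{1..K}. lam \<le> (\<Sum>l=1..m. D l \<omega>)}. w \<omega>)
           \<le> exp (- \<theta> * lam + \<theta>\<^sup>2 * (\<Sum>k=1..K. v k) / (2 * (1 - \<theta> * b / 3))) * (\<Sum>\<omega>\<in>\<Omega>. w \<omega>)"
    (is "(\<Sum>\<omega>\<in>?E. w \<omega>) \<le> _")
proof -
  have "(\<Sum>\<omega>\<in>?E. w \<omega>) \<le> (\<Sum>\<omega>\<in>?E. w \<omega> * exp (\<theta> * (stopped_sum lam K \<omega> - lam)))"
  proof (intro sum_mono)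
    fix \<omega> assume "\<omega> \<in> ?E"
    then have "1 \<le> exp (\<theta> * (stopped_sum lam K \<omega> - lam))" "0 \<le> w \<omega>"
      using level_le_stopped_sum[of _ K lam "\<lambda>j. D j \<omega>"] \<theta> weight_nonneg by auto
    then show "w \<omega> \<le> w \<omega> * exp (\<theta> * (stopped_sum lam K \<omega> - lam))"
      by (simp add: mult_le_cancel_left1)
  qed
  also have "\<dots> \<le> (\<Sum>\<omega>\<in>\<Omega>. w \<omega> * exp (\<theta> * (stopped_sum lam K \<omega> - lam)))"
    using finite_space weight_nonneg by (intro sum_mono2) auto
  also have "\<dots> = exp (- \<theta> * lam) * (\<Sum>\<omega>\<in>\<Omega>. w \<omega> * exp (\<theta> * stopped_sum lam K \<omega>))"
    by (simp add: sum_distrib_left right_diff_distrib exp_diff exp_minus field_simps)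
  also have "\<dots> \<le> exp (- \<theta> * lam) * (exp (\<theta>\<^sup>2 * (\<Sum>k=1..K. v k) / (2 * (1 - \<theta> * b / 3))) * (\<Sum>\<omega>\<in>\<Omega>. w \<omega>))"
    by (intro mult_left_mono exp_moment_stopped_sum \<theta>) auto
  also have "\<dots> = exp (- \<theta> * lam + \<theta>\<^sup>2 * (\<Sum>k=1..K. v k) / (2 * (1 - \<theta> * b / 3))) * (\<Sum>\<omega>\<in>\<Omega>. w \<omega>)"
    by (simp only: exp_add mult.assoc)
  finally show ?thesis .
qed

theorem freedman_inequality:
  assumes "0 < lam"
  shows "(\<Sum>\<omega>\<in>{\<omega>\<in>\<Omega>. \<exists>m\<in>{1..K}. lam \<le> (\<Sum>l=1..m. D l \<omega>)}. w \<omega>)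
           \<le> exp (- lam\<^sup>2 / (2 * ((\<Sum>k=1..K. v k) + b * lam / 3))) * (\<Sum>\<omega>\<in>\<Omega>. w \<omega>)"
proof -
  define V where "V = (\<Sum>k=1..K. v k)"
  define B where "B = V + b * lam / 3"
  have "0 \<le> V" unfolding V_def using var_nonneg by (simp add: sum_nonneg)
  then have "0 < B" using assms b_pos by (simp add: B_def add_nonneg_pos)
  \<comment> \<open>\<theta> = lam / B optimises the exponent but needs V > 0; for V = 0, \<theta> = 3/(2b) gives the same bound\<close>
  obtain \<theta> where \<theta>: "0 < \<theta>" "\<theta> * b < 3"
    and exponent: "- \<theta> * lam + \<theta>\<^sup>2 * V / (2 * (1 - \<theta> * b / 3)) = - lam\<^sup>2 / (2 * B)"
  proof (cases "V = 0")
    case True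
    have "- (3 / (2 * b)) * lam = - lam\<^sup>2 / (2 * (b * lam / 3))"
      using b_pos assms by (simp add: field_simps power2_eq_square)
    then show ?thesis
      using b_pos True by (intro that[of "3 / (2 * b)"]) (auto simp: B_def)
  next
    case False
    with \<open>0 \<le> V\<close> have "0 < V" by simp
    have "1 - lam / B * b / 3 = V / B" using \<open>0 < B\<close> by (simp add: B_def field_simps)
    moreover have "(lam / B)\<^sup>2 * V / (2 * (V / B)) = lam\<^sup>2 / (2 * B)"
      using \<open>0 < B\<close> \<open>0 < V\<close> by (simp add: field_simps power2_eq_square)
    ultimately have "- (lam / B) * lam + (lam / B)\<^sup>2 * V / (2 * (1 - lam / B * b / 3))
        = - (lam / B) * lam + lam\<^sup>2 / (2 * B)" by simp
    also have "\<dots> = - lam\<^sup>2 / (2 * B)"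
      using \<open>0 < B\<close> by (simp add: field_simps power2_eq_square)
    finally have "- (lam / B) * lam + (lam / B)\<^sup>2 * V / (2 * (1 - lam / B * b / 3)) = - lam\<^sup>2 / (2 * B)" .
    moreover have "lam / B * b < 3"
      using \<open>0 < B\<close> \<open>0 < V\<close> assms b_pos by (simp add: B_def field_simps)
    ultimately show ?thesis
      using \<open>0 < B\<close> assms by (intro that[of "lam / B"]) auto
  qed
  show ?thesis
    using level_crossing_weight_le[OF \<theta>, of lam] unfolding V_def[symmetric] exponent B_def .
qed

end

section \<open>Binomial tails and the random graph\<close>

lemma pihat_eq_prob_Pi_pmf:
  assumes p: "0 \<le> p" "p \<le> 1" and "finite A'" "A \<subseteq> A'"
  shows "measure_pmf.prob (Pi_pmf A' False (\<lambda>_. bernoulli_pmf p)) {f. r \<le> card {x\<in>A. f x}}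
           = pihat p r (card A)"
proof -
  let ?restrict = "\<lambda>f x. if x \<in> A then f x else False"
  have "finite A" using assms finite_subset by blast
  have restrict: "?restrict -` {f. r \<le> card {x\<in>A. f x}} = {f. r \<le> card {x\<in>A. f x}}"
  proof -
    have "{x\<in>A. ?restrict f x} = {x\<in>A. f x}" for f by auto
    then show ?thesis by auto
  qed
  have "pihat p r (card A) = measure_pmf.prob (Pi_pmf A False (\<lambda>_. bernoulli_pmf p)) {f. r \<le> card {x\<in>A. f x}}"
    unfolding pihat_def using p by (subst binomial_pmf_altdef'[OF \<open>finite A\<close> refl]) (auto simp: vimage_def)
  also have "Pi_pmf A False (\<lambda>_. bernoulli_pmf p) = map_pmf ?restrict (Pi_pmf A' False (\<lambda>_. bernoulli_pmf p))"
    using assms(3,4) by (rule Pi_pmf_subset)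
  finally show ?thesis by (simp only: measure_map_pmf restrict)
qed

lemma pihat_mono:
  assumes "0 \<le> p" "p \<le> 1" and "m \<le> m'"
  shows "pihat p r m \<le> pihat p r m'"
proof -
  let ?P = "Pi_pmf {0..<m'} False (\<lambda>_. bernoulli_pmf p)"
  have "card {x \<in> {0..<m}. f x} \<le> card {x \<in> {0..<m'}. f x}" for f :: "nat \<Rightarrow> bool"
    using assms by (intro card_mono) auto
  then have "measure_pmf.prob ?P {f. r \<le> card {x\<in>{0..<m}. f x}} \<le> measure_pmf.prob ?P {f. r \<le> card {x\<in>{0..<m'}. f x}}"
    by (intro measure_pmf.finite_measure_mono) (auto intro: order.trans)
  also have "\<dots> = pihat p r m'"
    using pihat_eq_prob_Pi_pmf[OF assms(1,2), of "{0..<m'}" "{0..<m'}"] by simp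
  also have "measure_pmf.prob ?P {f. r \<le> card {x\<in>{0..<m}. f x}} = pihat p r m"
    using pihat_eq_prob_Pi_pmf[OF assms(1,2), of "{0..<m'}" "{0..<m}"] assms by simp
  finally show ?thesis .
qed

lemma pihat_zero: "0 \<le> p \<Longrightarrow> p \<le> 1 \<Longrightarrow> 1 \<le> r \<Longrightarrow> pihat p r 0 = 0"
  unfolding pihat_def by (simp add: binomial_pmf_0)

lemma pihat_nonneg: "0 \<le> pihat p r m"
  unfolding pihat_def by simp

lemma pihat_less_1:
  assumes "0 \<le> p" "p < 1" "1 \<le> r"
  shows "pihat p r m < 1"
proof -
  let ?B = "binomial_pmf m p"
  have "measure_pmf.prob ?B {k. r \<le> k} + measure_pmf.prob ?B {0} = measure_pmf.prob ?B ({k. r \<le> k} \<union> {0})"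
    using assms by (subst measure_pmf.finite_measure_Union) auto
  also have "\<dots> \<le> 1" by simp
  finally have "pihat p r m \<le> 1 - pmf ?B 0" unfolding pihat_def by (simp add: measure_pmf_single)
  moreover have "pmf ?B 0 = (1 - p) ^ m" "(1 - p) ^ m > 0" using assms by simp_all
  ultimately show ?thesis by linarith
qed

lemma prob_map_pair_pmf_rectangle:
  assumes "\<And>x y. x \<in> set_pmf M \<Longrightarrow> y \<in> set_pmf N \<Longrightarrow> f (x, y) \<in> E \<longleftrightarrow> x \<in> A \<and> y \<in> B"
  shows "measure_pmf.prob (map_pmf f (pair_pmf M N)) E = measure_pmf.prob M A * measure_pmf.prob N B"
proof -
  have "measure_pmf.prob (map_pmf f (pair_pmf M N)) E = measure_pmf.prob (pair_pmf M N) (f -` E)"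
    by simp
  also have "\<dots> = measure_pmf.prob (pair_pmf M N) (f -` E \<inter> set_pmf (pair_pmf M N))"
    by (rule measure_Int_set_pmf[symmetric])
  also have "f -` E \<inter> set_pmf (pair_pmf M N) = (A \<inter> set_pmf M) \<times> (B \<inter> set_pmf N)"
    using assms by auto
  also have "measure_pmf.prob (pair_pmf M N) \<dots> = measure_pmf.prob M (A \<inter> set_pmf M) * measure_pmf.prob N (B \<inter> set_pmf N)"
    by (rule measure_pmf_prob_product) (auto intro: countable_subset)
  finally show ?thesis by (simp add: measure_Int_set_pmf)
qed

lemma finite_edge_slots: "finite (edge_slots n)"
proof (rule finite_subset)
  show "edge_slots n \<subseteq> {1..n} \<times> {1..n}" unfolding edge_slots_def by auto
qed simp

lemma finite_set_pmf_gnp: "finite (set_pmf (gnp n p))"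
proof -
  have "set_pmf (gnp n p) = PiE_dflt (edge_slots n) False (set_pmf \<circ> (\<lambda>_. bernoulli_pmf p))"
    unfolding gnp_def by (rule set_Pi_pmf[OF finite_edge_slots])
  then show ?thesis using finite_edge_slots by auto
qed

lemma sum_pmf_gnp: "(\<Sum>G\<in>{G\<in>set_pmf (gnp n p). P G}. pmf (gnp n p) G) = measure_pmf.prob (gnp n p) {G. P G}"
proof -
  have "(\<Sum>G\<in>{G\<in>set_pmf (gnp n p). P G}. pmf (gnp n p) G) = measure_pmf.prob (gnp n p) {G\<in>set_pmf (gnp n p). P G}"
    using finite_set_pmf_gnp by (simp add: measure_measure_pmf_finite)
  also have "\<dots> = measure_pmf.prob (gnp n p) ({G. P G} \<inter> set_pmf (gnp n p))"
    by (rule arg_cong[where f="measure_pmf.prob (gnp n p)"]) auto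
  finally show ?thesis by (simp only: measure_Int_set_pmf)
qed

definition incident_slots :: "nat \<Rightarrow> (nat \<times> nat) set" where
  "incident_slots w = {e. fst e = w \<or> snd e = w}"

text \<open>G(n,p) splits into the independent edges not at w and the edges at w.\<close>
definition merge_graphs :: "nat \<Rightarrow> nat \<Rightarrow> graph \<times> graph \<Rightarrow> graph" where
  "merge_graphs n w = (\<lambda>(H, K) e. if e \<in> edge_slots n - incident_slots w then H e else K e)"

abbreviation edges_off :: "nat \<Rightarrow> real \<Rightarrow> nat \<Rightarrow> graph pmf" where
  "edges_off n p w \<equiv> Pi_pmf (edge_slots n - incident_slots w) False (\<lambda>_. bernoulli_pmf p)"

abbreviation edges_at :: "nat \<Rightarrow> real \<Rightarrow> nat \<Rightarrow> graph pmf" where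
  "edges_at n p w \<equiv> Pi_pmf (edge_slots n \<inter> incident_slots w) False (\<lambda>_. bernoulli_pmf p)"

lemma gnp_eq_merge_graphs: "gnp n p = map_pmf (merge_graphs n w) (pair_pmf (edges_off n p w) (edges_at n p w))"
proof -
  have "edge_slots n = (edge_slots n - incident_slots w) \<union> (edge_slots n \<inter> incident_slots w)" by auto
  then have "gnp n p = Pi_pmf ((edge_slots n - incident_slots w) \<union> (edge_slots n \<inter> incident_slots w)) False (\<lambda>_. bernoulli_pmf p)"
    unfolding gnp_def by simp
  also have "\<dots> = map_pmf (merge_graphs n w) (pair_pmf (edges_off n p w) (edges_at n p w))"
    unfolding merge_graphs_def by (rule Pi_pmf_union) (use finite_edge_slots in auto)
  finally show ?thesis .
qed

lemma prob_edges_at_many_neighbours: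
  assumes "0 \<le> p" "p \<le> 1" and w: "w \<in> {1..n}" and S: "S \<subseteq> {1..n}" "w \<notin> S"
  shows "measure_pmf.prob (edges_at n p w) {K. r \<le> card {v\<in>S. adj K w v}} = pihat p r (card S)"
proof -
  define slot where "slot v = (min w v, max w v)" for v
  have "inj_on slot S" unfolding slot_def inj_on_def using S by (auto simp: min_def max_def split: if_splits)
  have "v \<noteq> w" if "v \<in> S" for v using S that by auto
  then have "slot ` S \<subseteq> edge_slots n \<inter> incident_slots w"
    using S w unfolding slot_def edge_slots_def incident_slots_def by (force simp: min_def max_def)
  have "{e\<in>slot ` S. K e} = slot ` {v\<in>S. adj K w v}" for K
    using S unfolding adj_def slot_def by (auto simp: min_def max_def)
  then have "card {v\<in>S. adj K w v} = card {e\<in>slot ` S. K e}" for K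
    using \<open>inj_on slot S\<close> by (simp add: card_image inj_on_subset)
  then have "measure_pmf.prob (edges_at n p w) {K. r \<le> card {v\<in>S. adj K w v}} = pihat p r (card (slot ` S))"
    using assms \<open>slot ` S \<subseteq> _\<close> finite_edge_slots by (simp add: pihat_eq_prob_Pi_pmf)
  then show ?thesis using \<open>inj_on slot S\<close> by (simp add: card_image)
qed

definition isolate :: "nat \<Rightarrow> graph \<Rightarrow> graph" where
  "isolate w G = (\<lambda>e. if fst e = w \<or> snd e = w then False else G e)"

lemma adj_isolate: "x \<noteq> w \<Longrightarrow> v \<noteq> w \<Longrightarrow> adj (isolate w G) x v = adj G x v"
  unfolding adj_def isolate_def by auto

lemma not_adj_isolate: "\<not> adj (isolate w G) w v"
  unfolding adj_def isolate_def by auto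

lemma isolate_merge_graphs:
  assumes "H \<in> set_pmf (edges_off n p w)" "K \<in> set_pmf (edges_at n p w)"
  shows "isolate w (merge_graphs n w (H, K)) = H"
    and "adj (merge_graphs n w (H, K)) w v = adj K w v"
proof -
  have "H \<in> {f. \<forall>e. e \<notin> edge_slots n - incident_slots w \<longrightarrow> f e = False}"
    using finite_edge_slots by (intro subsetD[OF set_Pi_pmf_subset assms(1)]) simp
  moreover have "K \<in> {f. \<forall>e. e \<notin> edge_slots n \<inter> incident_slots w \<longrightarrow> f e = False}"
    using finite_edge_slots by (intro subsetD[OF set_Pi_pmf_subset assms(2)]) simp
  ultimately show "isolate w (merge_graphs n w (H, K)) = H"
    unfolding isolate_def merge_graphs_def by (auto simp: incident_slots_def fun_eq_iff)
  show "adj (merge_graphs n w (H, K)) w v = adj K w v"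
    unfolding adj_def merge_graphs_def by (auto simp: incident_slots_def)
qed

lemma inverse_one_minus_le_cube:
  fixes x c :: real assumes "0 \<le> x" "x \<le> c" "c < 1"
  shows "1 / (1 - x) \<le> 1 / (1 - c) ^ 3"
proof -
  have "(1 - c) ^ 3 \<le> (1 - c) ^ 1" using assms by (intro power_decreasing) auto
  then have "(1 - c) ^ 3 \<le> 1 - x" using assms by simp
  then show ?thesis using assms by (intro divide_left_mono) auto
qed

lemma normalized_indicator_diff_bound:
  fixes x1 x2 c1 c2 c :: real
  assumes x: "x1 \<in> {0, 1}" "x2 \<in> {0, 1}" "x1 \<le> x2"
    and c: "0 \<le> c1" "c1 \<le> c" "0 \<le> c2" "c2 \<le> c" "c < 1"
  shows "\<bar>(x2 - c2) / (1 - c2) - (x1 - c1) / (1 - c1)\<bar> \<le> 1 / (1 - c) ^ 3"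
proof -
  have pos: "0 < 1 - c1" "0 < 1 - c2" using c by auto
  have bound: "1 / (1 - c1) \<le> 1 / (1 - c) ^ 3" "1 / (1 - c2) \<le> 1 / (1 - c) ^ 3"
    using inverse_one_minus_le_cube c by auto
  have "c1 / (1 - c1) \<le> 1 / (1 - c1)" "c2 / (1 - c2) \<le> 1 / (1 - c2)" "0 \<le> c1 / (1 - c1)" "0 \<le> c2 / (1 - c2)"
    using pos c by (auto intro: divide_right_mono)
  moreover have "1 / (1 - c1) - c1 / (1 - c1) = 1" "1 / (1 - c2) - c2 / (1 - c2) = 1"
    using pos by (simp_all add: diff_divide_distrib[symmetric])
  moreover have "1 + c1 / (1 - c1) = 1 / (1 - c1)" using pos by (simp add: field_simps)
  ultimately show ?thesis
    using x bound by (auto simp: diff_divide_distrib abs_le_iff)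
qed

lemma diff_normalized_eq:
  fixes c1 c2 :: real assumes "c1 < 1" "c2 < 1"
  shows "c1 / (1 - c1) - c2 / (1 - c2) = (c1 - c2) / ((1 - c1) * (1 - c2))"
proof -
  have "c1 / (1 - c1) - c2 / (1 - c2) = (c1 * (1 - c2) - c2 * (1 - c1)) / ((1 - c1) * (1 - c2))"
    using assms by (intro diff_frac_eq) auto
  then show ?thesis by (simp add: algebra_simps)
qed

text \<open>On an atom where X(\<tau> - 1, i) = 0, the increment is u X(\<tau>, i) + d with u = 1/(1 - c2),
  d = c1/(1 - c1) - c2/(1 - c2), and the atom and its part with X(\<tau>, i) = 1 have weights
  \<beta>(1 - c1) and \<beta>(c2 - c1).\<close>
lemma unsettled_incr_mean_eq_0:
  fixes \<beta> c1 c2 :: real assumes "c1 < 1" "c2 < 1"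
  shows "\<beta> * (c2 - c1) * (1 / (1 - c2)) + \<beta> * (1 - c1) * (c1 / (1 - c1) - c2 / (1 - c2)) = 0"
proof -
  have "\<beta> * (1 - c1) * (c1 / (1 - c1) - c2 / (1 - c2)) = \<beta> * (c1 - c2) / (1 - c2)"
    using assms by (simp add: diff_normalized_eq)
  then show ?thesis by (simp add: add_divide_distrib[symmetric] algebra_simps)
qed

lemma unsettled_incr_var_le:
  fixes \<beta> c1 c2 c :: real
  assumes "0 \<le> \<beta>" and c: "0 \<le> c1" "c1 \<le> c2" "c2 \<le> c" "c < 1"
  shows "\<beta> * (c2 - c1) * ((1 / (1 - c2))\<^sup>2 + 2 * (1 / (1 - c2)) * (c1 / (1 - c1) - c2 / (1 - c2)))
         + \<beta> * (1 - c1) * (c1 / (1 - c1) - c2 / (1 - c2))\<^sup>2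
       \<le> (c2 - c1) / (1 - c) ^ 3 * (\<beta> * (1 - c1))"
proof -
  define u q where "u = 1 / (1 - c2)" and "q = (c2 - c1) / (1 - c1)"
  have pos: "0 < 1 - c1" "0 < 1 - c2" "0 < 1 - c" using c by auto
  have e: "c2 - c1 = q * (1 - c1)" and d: "c1 / (1 - c1) - c2 / (1 - c2) = - q * u"
    using pos c by (simp_all add: q_def u_def diff_normalized_eq minus_divide_left)
  have "\<beta> * (c2 - c1) * (u\<^sup>2 + 2 * u * (c1 / (1 - c1) - c2 / (1 - c2)))
         + \<beta> * (1 - c1) * (c1 / (1 - c1) - c2 / (1 - c2))\<^sup>2
      = \<beta> * (q * (1 - c1)) * (u\<^sup>2 + 2 * u * (- q * u)) + \<beta> * (1 - c1) * (- q * u)\<^sup>2"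
    by (simp only: d e)
  also have "\<dots> = \<beta> * (q * (1 - c1)) * u\<^sup>2 * (1 - q)"
    by (simp add: algebra_simps power2_eq_square)
  also have "\<dots> = \<beta> * (c2 - c1) * u\<^sup>2 * (1 - q)"
    by (simp only: e)
  also have "\<dots> \<le> \<beta> * (c2 - c1) * u\<^sup>2"
    using assms pos by (simp add: q_def mult_left_le)
  also have "\<dots> \<le> \<beta> * (c2 - c1) * ((1 - c1) / (1 - c) ^ 3)"
  proof (intro mult_left_mono)
    have "(1 - c) ^ 3 = (1 - c) * (1 - c)\<^sup>2" by (simp add: power2_eq_square power3_eq_cube)
    also have "\<dots> \<le> (1 - c1) * (1 - c2)\<^sup>2" using pos c by (intro mult_mono power_mono) auto
    finally show "u\<^sup>2 \<le> (1 - c1) / (1 - c) ^ 3"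
      using pos by (simp add: u_def power_divide field_simps)
  qed (use assms in auto)
  finally show ?thesis unfolding u_def by (simp add: field_simps)
qed

lemma sum_affine_indicator:
  fixes f x :: "'a \<Rightarrow> real"
  assumes "finite F" and "\<And>\<omega>. \<omega> \<in> F \<Longrightarrow> x \<omega> \<in> {0, 1}"
  shows "(\<Sum>\<omega>\<in>F. f \<omega> * (x \<omega> * c + d)) = (\<Sum>\<omega>\<in>{\<omega>\<in>F. x \<omega> = 1}. f \<omega>) * c + (\<Sum>\<omega>\<in>F. f \<omega>) * d"
proof -
  have "(\<Sum>\<omega>\<in>F. f \<omega> * (x \<omega> * c + d)) = (\<Sum>\<omega>\<in>F. (if x \<omega> = 1 then f \<omega> else 0) * c + f \<omega> * d)"
    using assms(2) by (intro sum.cong refl) (auto simp: algebra_simps)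
  also have "\<dots> = (\<Sum>\<omega>\<in>{\<omega>\<in>F. x \<omega> = 1}. f \<omega>) * c + (\<Sum>\<omega>\<in>F. f \<omega>) * d"
    using assms(1) by (simp add: sum.distrib sum_distrib_right sum.inter_filter)
  finally show ?thesis .
qed

text \<open>The k-th round (counting from 1) in the lexicographic order of the rounds (\<tau>, i) with
  \<tau> \<ge> 1 and 1 \<le> i \<le> N.\<close>
definition round_of :: "nat \<Rightarrow> nat \<Rightarrow> nat \<times> nat" where
  "round_of N k = ((k - 1) div N + 1, (k - 1) mod N + 1)"

lemma round_of_block:
  assumes "1 \<le> j" "j \<le> N"
  shows "round_of N (s * N + j) = (s + 1, j)"
proof -
  have "N \<noteq> 0" using assms by auto
  have e: "s * N + j - 1 = (j - 1) + s * N" using assms by simp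
  have "round_of N (s * N + j) = ((j - 1 + s * N) div N + 1, (j - 1 + s * N) mod N + 1)"
    by (simp only: round_of_def e)
  also have "(j - 1 + s * N) div N = s + (j - 1) div N" using \<open>N \<noteq> 0\<close> by simp
  also have "(j - 1 + s * N) mod N = (j - 1) mod N" by simp
  finally have "round_of N (s * N + j) = (s + (j - 1) div N + 1, (j - 1) mod N + 1)" .
  moreover have "(j - 1) div N = 0" "(j - 1) mod N = j - 1" using assms by auto
  ultimately show ?thesis using assms by simp
qed

lemma sum_round_of_block:
  assumes "i \<le> N"
  shows "(\<Sum>l = s * N + 1..s * N + i. f (round_of N l)) = (\<Sum>j = 1..i. f (s + 1, j))"
proof -
  have "(\<Sum>l = s * N + 1..s * N + i. f (round_of N l)) = (\<Sum>j = 1..i. f (round_of N (j + s * N)))"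
    using sum.shift_bounds_cl_nat_ivl[of "\<lambda>l. f (round_of N l)" 1 "s * N" i] by (simp add: add.commute)
  also have "\<dots> = (\<Sum>j = 1..i. f (s + 1, j))"
    using round_of_block[of _ N s] assms by (intro sum.cong refl) (simp add: add.commute)
  finally show ?thesis .
qed

lemma round_of_range:
  assumes "k \<in> {1..t * N}"
  shows "1 \<le> fst (round_of N k)" "fst (round_of N k) \<le> t" "snd (round_of N k) \<in> {1..N}"
proof -
  have "0 < N" using assms by (cases N) auto
  have "(k - 1) div N < t" using assms by (intro less_mult_imp_div_less) auto
  then show "1 \<le> fst (round_of N k)" "fst (round_of N k) \<le> t" unfolding round_of_def by auto
  have "(k - 1) mod N < N" using \<open>0 < N\<close> by simp
  then show "snd (round_of N k) \<in> {1..N}" unfolding round_of_def by auto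
qed

lemma round_of_less:
  assumes "1 \<le> l" "l < k"
  shows "fst (round_of N l) < fst (round_of N k)
         \<or> (fst (round_of N l) = fst (round_of N k) \<and> snd (round_of N l) < snd (round_of N k))"
proof -
  define x y where "x = l - 1" and "y = k - 1"
  have "x < y" using assms by (simp add: x_def y_def)
  have "x div N \<le> y div N" using \<open>x < y\<close> by (simp add: div_le_mono)
  moreover have "x mod N < y mod N" if "x div N = y div N"
  proof -
    have "x = N * (x div N) + x mod N" "y = N * (y div N) + y mod N" by simp_all
    moreover have "N * (x div N) = N * (y div N)" using that by simp
    ultimately show ?thesis using \<open>x < y\<close> by linarith
  qed
  ultimately show ?thesis unfolding round_of_def x_def[symmetric] y_def[symmetric] by force
qed

lemma sum_round_of_diff:
  fixes f :: "nat \<Rightarrow> real"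
  shows "(\<Sum>k = 1..s * N. f (fst (round_of N k)) - f (fst (round_of N k) - 1)) = real N * (f s - f 0)"
proof (induction s)
  case (Suc s)
  have "(\<Sum>k = 1..Suc s * N. f (fst (round_of N k)) - f (fst (round_of N k) - 1))
     = (\<Sum>k = 1..s * N. f (fst (round_of N k)) - f (fst (round_of N k) - 1))
       + (\<Sum>k = s * N + 1..s * N + N. f (fst (round_of N k)) - f (fst (round_of N k) - 1))"
    using sum.ub_add_nat[of 1 "s * N" _ N] by (simp add: add.commute)
  also have "(\<Sum>k = s * N + 1..s * N + N. f (fst (round_of N k)) - f (fst (round_of N k) - 1))
     = real N * (f (Suc s) - f s)"
    using sum_round_of_block[of N N "\<lambda>x. f (fst x) - f (fst x - 1)" s] by simp
  finally show ?case using Suc by (simp add: algebra_simps)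
qed simp

lemma bernstein_exponent_le:
  fixes N n c lam :: real
  assumes "0 \<le> c" "c < 1" "0 \<le> N" "N \<le> n" "0 < lam"
  shows "exp (- lam\<^sup>2 / (2 * (N * c / (1 - c) ^ 3 + 1 / (1 - c) ^ 3 * lam / 3)))
       \<le> exp (- (lam\<^sup>2 * (1 - c) ^ 3) / (2 * (n * c + lam / 3)))"
proof -
  have "0 < (1 - c) ^ 3" using assms by simp
  have "N * c / (1 - c) ^ 3 + 1 / (1 - c) ^ 3 * lam / 3 = (N * c + lam / 3) / (1 - c) ^ 3"
    using \<open>0 < (1 - c) ^ 3\<close> by (simp add: field_simps)
  moreover have "lam\<^sup>2 * (1 - c) ^ 3 / (2 * (n * c + lam / 3)) \<le> lam\<^sup>2 * (1 - c) ^ 3 / (2 * (N * c + lam / 3))"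
  proof (rule divide_left_mono)
    show "2 * (N * c + lam / 3) \<le> 2 * (n * c + lam / 3)" using assms by (simp add: mult_right_mono)
    have "0 < 2 * (N * c + lam / 3)" "0 < 2 * (n * c + lam / 3)"
      using assms by (simp_all add: add_nonneg_pos)
    then show "0 < 2 * (n * c + lam / 3) * (2 * (N * c + lam / 3))" by simp
  qed (use \<open>0 < (1 - c) ^ 3\<close> in simp)
  ultimately show ?thesis
    using \<open>0 < (1 - c) ^ 3\<close> by (simp add: divide_divide_eq_right)
qed

section \<open>The exploration process\<close>

locale exploration =
  fixes n a r :: nat and sel :: "nat list \<Rightarrow> nat set \<Rightarrow> nat"
  assumes a_le_n: "a \<le> n"
    and sel_mem: "\<And>xs S. finite S \<Longrightarrow> S \<noteq> {} \<Longrightarrow> sel xs S \<in> S"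
    and r_pos: "1 \<le> r"
begin

abbreviation Z :: "graph \<Rightarrow> nat \<Rightarrow> nat list" where
  "Z G t \<equiv> zseq n a r sel G t"

abbreviation Act :: "graph \<Rightarrow> nat list \<Rightarrow> nat set" where
  "Act G zs \<equiv> Aset n a r G zs"

abbreviation X :: "graph \<Rightarrow> nat \<Rightarrow> nat \<Rightarrow> real" where
  "X G s j \<equiv> Xind n a r sel G s j"

lemma Aset_subset: "Act G zs \<subseteq> {1..n}"
  using a_le_n unfolding Aset_def by auto

lemma finite_Aset: "finite (Act G zs)"
  using Aset_subset finite_subset by blast

lemma Aset_mono:
  assumes "set zs \<subseteq> set zs'"
  shows "Act G zs \<subseteq> Act G zs'"
proof -
  have "card {v \<in> set zs. adj G (a + i) v} \<le> card {v \<in> set zs'. adj G (a + i) v}" for i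
    using assms by (intro card_mono) auto
  then show ?thesis unfolding Aset_def by (auto intro: order.trans)
qed

lemma zseq_Suc: "Z G (Suc t) = (if Act G (Z G t) - set (Z G t) = {} then Z G t
     else Z G t @ [sel (Z G t) (Act G (Z G t) - set (Z G t))])"
  by (simp add: Let_def)

declare zseq.simps(2)[simp del]

lemma sel_mem_candidates: "Act G zs - set zs \<noteq> {} \<Longrightarrow> sel xs (Act G zs - set zs) \<in> Act G zs - set zs"
  using finite_Aset by (intro sel_mem) auto

lemma set_zseq_subset_Aset: "set (Z G t) \<subseteq> Act G (Z G t)"
proof (induction t)
  case (Suc t)
  have "set (Z G (Suc t)) \<subseteq> Act G (Z G t)"
    using Suc sel_mem_candidates[of G "Z G t" "Z G t"] by (auto simp: zseq_Suc)
  also have "\<dots> \<subseteq> Act G (Z G (Suc t))"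
    by (rule Aset_mono) (auto simp: zseq_Suc)
  finally show ?case .
qed simp

lemma set_zseq_subset: "set (Z G t) \<subseteq> {1..n}"
  using set_zseq_subset_Aset Aset_subset by blast

lemma distinct_zseq: "distinct (Z G t)"
  by (induction t) (use sel_mem_candidates in \<open>auto simp: zseq_Suc\<close>)

lemma set_zseq_mono: "s \<le> t \<Longrightarrow> set (Z G s) \<subseteq> set (Z G t)"
  by (rule lift_Suc_mono_le[of "\<lambda>t. set (Z G t)"]) (auto simp: zseq_Suc)

definition stalled :: "graph \<Rightarrow> nat \<Rightarrow> bool" where
  "stalled G t \<longleftrightarrow> Aproc n a r sel G t = Zset n a r sel G t"

lemma stalled_iff: "stalled G t \<longleftrightarrow> Act G (Z G t) - set (Z G t) = {}"
  unfolding stalled_def Aproc_def Zset_def using set_zseq_subset_Aset[of G t] by auto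

lemma zseq_stalled: "stalled G t \<Longrightarrow> Z G (t + k) = Z G t"
  by (induction k) (auto simp: zseq_Suc stalled_iff)

lemma length_zseq_Suc: "\<not> stalled G t \<Longrightarrow> length (Z G (Suc t)) = Suc (length (Z G t))"
  by (simp add: zseq_Suc stalled_iff)

lemma length_zseq_le: "length (Z G t) \<le> t"
  by (induction t) (auto simp: zseq_Suc)

text \<open>Without stalling, Z(n + 1) would consist of n + 1 distinct vertices of [n].\<close>
lemma ex_stalled: "\<exists>t. stalled G t"
proof (rule ccontr)
  assume "\<nexists>t. stalled G t"
  then have "length (Z G t) = t" for t
    by (induction t) (simp_all add: length_zseq_Suc)
  then have "card (set (Z G (Suc n))) = Suc n"
    using distinct_card[OF distinct_zseq] by simp
  moreover have "card (set (Z G (Suc n))) \<le> card {1..n}"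
    using set_zseq_subset by (intro card_mono) auto
  ultimately show False by simp
qed

lemma stalled_Tstop: "stalled G (Tstop n a r sel G)"
  using LeastI_ex[OF ex_stalled] unfolding Tstop_def stalled_def .

lemma not_stalled_before_Tstop: "t < Tstop n a r sel G \<Longrightarrow> \<not> stalled G t"
  unfolding Tstop_def stalled_def by (rule not_less_Least)

lemma length_zseq: "length (Z G s) = min s (Tstop n a r sel G)"
proof -
  define T where "T = Tstop n a r sel G"
  have before: "length (Z G s) = s" if "s \<le> T" for s
    using that by (induction s) (simp_all add: length_zseq_Suc not_stalled_before_Tstop T_def)
  show ?thesis
  proof (cases "s \<le> T")
    case False
    then have "Z G s = Z G (T + (s - T))" by simp
    also have "\<dots> = Z G T" using zseq_stalled stalled_Tstop unfolding T_def by blast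
    finally show ?thesis using before[of T] False unfolding T_def by simp
  qed (simp add: before T_def)
qed

lemma length_zseq_mono: "s \<le> s' \<Longrightarrow> length (Z G s) \<le> length (Z G s')"
  unfolding length_zseq by simp

lemma piproc_eq_pihat_length: "piproc n a r sel p G s = pihat p r (length (Z G s))"
  unfolding piproc_def length_zseq ..

lemma Xind_eq: "X G s j = of_bool (r \<le> card {v \<in> set (Z G s). adj G (a + j) v})"
  unfolding Xind_def Zset_def ..

lemma Xind_cases: "X G s j = 0 \<or> X G s j = 1"
  unfolding Xind_def by simp

lemma Xind_mono:
  assumes "s \<le> s'"
  shows "X G s j \<le> X G s' j"
proof -
  have "card {v \<in> set (Z G s). adj G (a + j) v} \<le> card {v \<in> set (Z G s'). adj G (a + j) v}"
    using set_zseq_mono[OF assms] by (intro card_mono) auto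
  then show ?thesis unfolding Xind_eq by auto
qed

lemma Xind_0: "X G 0 j = 0"
  unfolding Xind_eq using r_pos by simp

text \<open>The fibers of the history at round (\<tau>, i) are the atoms of the filtration of M.\<close>
definition history :: "graph \<Rightarrow> nat \<Rightarrow> nat \<Rightarrow> (nat \<Rightarrow> nat list) \<times> (nat \<Rightarrow> nat \<Rightarrow> real)" where
  "history G \<tau> i = ((\<lambda>s. if s \<le> \<tau> then Z G s else []),
      (\<lambda>s j. if s < \<tau> \<or> (s = \<tau> \<and> j < i) then X G s j else 0))"

lemma history_eqD:
  assumes "history G \<tau> i = history G' \<tau> i"
  shows "\<And>s. s \<le> \<tau> \<Longrightarrow> Z G s = Z G' s"
    and "\<And>s j. s < \<tau> \<or> (s = \<tau> \<and> j < i) \<Longrightarrow> X G s j = X G' s j"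
proof -
  fix s assume "s \<le> \<tau>"
  then show "Z G s = Z G' s"
    using fun_cong[OF arg_cong[where f=fst, OF assms], of s] by (simp add: history_def)
next
  fix s j assume "s < \<tau> \<or> (s = \<tau> \<and> j < i)"
  moreover have "snd (history G \<tau> i) s j = snd (history G' \<tau> i) s j" using assms by simp
  ultimately show "X G s j = X G' s j" by (simp add: history_def)
qed

lemma not_mem_Aset_isolate: "a < w \<Longrightarrow> w \<notin> Act (isolate w G) zs"
  unfolding Aset_def using r_pos not_adj_isolate by auto

lemma not_mem_zseq_isolate: "a < w \<Longrightarrow> w \<notin> set (Z (isolate w G) s)"
  using set_zseq_subset_Aset not_mem_Aset_isolate by blast

lemma Aset_isolate:
  assumes "a < w" "w \<notin> set zs" "card {v \<in> set zs. adj G w v} < r"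
  shows "Act (isolate w G) zs = Act G zs"
proof -
  have "{v \<in> set zs. adj (isolate w G) x v} = {v \<in> set zs. adj G x v}" if "x \<noteq> w" for x
    using assms(2) that by (intro Collect_cong) (metis adj_isolate)
  moreover have "card {v \<in> set zs. adj (isolate w G) w v} = 0"
    using not_adj_isolate by simp
  then have "\<not> r \<le> card {v \<in> set zs. adj (isolate w G) w v}"
    using r_pos by (simp only:)
  ultimately have "r \<le> card {v \<in> set zs. adj (isolate w G) (a + j) v} \<longleftrightarrow> r \<le> card {v \<in> set zs. adj G (a + j) v}"
    for j using assms(3) by (cases "a + j = w") auto
  then show ?thesis unfolding Aset_def by simp
qed

text \<open>As long as w = a + i has fewer than r explored neighbours, its edges cannot have
  influenced the exploration.\<close>
lemma zseq_isolate:
  assumes w: "a < w"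
    and few: "\<And>s. s < \<tau> \<Longrightarrow> Z (isolate w G) s = Z G s \<Longrightarrow> card {v \<in> set (Z G s). adj G w v} < r"
    and "s \<le> \<tau>"
  shows "Z (isolate w G) s = Z G s"
  using \<open>s \<le> \<tau>\<close>
proof (induction s)
  case (Suc s)
  then have "Z (isolate w G) s = Z G s" by simp
  moreover have "w \<notin> set (Z G s)"
    using \<open>Z (isolate w G) s = Z G s\<close> not_mem_zseq_isolate[OF w] by metis
  moreover have "card {v \<in> set (Z G s). adj G w v} < r"
    using few[of s] Suc.prems \<open>Z (isolate w G) s = Z G s\<close> by simp
  ultimately have "Act (isolate w G) (Z G s) = Act G (Z G s)"
    using Aset_isolate[OF w] by simp
  then show ?case using \<open>Z (isolate w G) s = Z G s\<close> by (simp add: zseq_Suc)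
qed simp

lemma Xind_isolate:
  assumes "a < w" "a + j \<noteq> w" "Z (isolate w G) s = Z G s"
  shows "X (isolate w G) s j = X G s j"
proof -
  have "w \<notin> set (Z G s)" using assms not_mem_zseq_isolate by metis
  then have "{v \<in> set (Z G s). adj (isolate w G) (a + j) v} = {v \<in> set (Z G s). adj G (a + j) v}"
    using assms(2) by (intro Collect_cong) (metis adj_isolate)
  then show ?thesis unfolding Xind_eq using assms(3) by simp
qed

lemma Xind_isolate_self: "X (isolate (a + i) G) s i = 0"
  unfolding Xind_eq using not_adj_isolate r_pos by simp

lemma history_isolate:
  assumes "i \<ge> 1" and zseq_eq: "\<And>s. s \<le> \<tau> \<Longrightarrow> Z (isolate (a + i) G) s = Z G s"
    and unsettled: "\<And>s. s < \<tau> \<Longrightarrow> X G s i = 0"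
  shows "history (isolate (a + i) G) \<tau> i = history G \<tau> i"
proof -
  have "X (isolate (a + i) G) s j = X G s j" if "s < \<tau> \<or> (s = \<tau> \<and> j < i)" for s j
  proof (cases "j = i")
    case True
    then show ?thesis using that unsettled Xind_isolate_self by auto
  next
    case False
    then show ?thesis using that assms Xind_isolate[of "a + i" j] by auto
  qed
  then show ?thesis unfolding history_def using zseq_eq by (auto simp: fun_eq_iff)
qed

lemma card_explored_neighbours_mono:
  "s \<le> s' \<Longrightarrow> card {v \<in> set (Z G s). adj G' w v} \<le> card {v \<in> set (Z G s'). adj G' w v}"
  using set_zseq_mono[of s s' G] by (intro card_mono) auto

lemma history_isolate_unsettled:
  assumes i: "i \<in> {1..n-a}" and "1 \<le> \<tau>" and unsettled: "X G (\<tau> - 1) i = 0"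
  shows "history (isolate (a + i) G) \<tau> i = history G \<tau> i"
proof -
  have few: "card {v \<in> set (Z G s). adj G (a + i) v} < r" if "s < \<tau>" for s
  proof -
    have "s \<le> \<tau> - 1" using that by simp
    from card_explored_neighbours_mono[OF this, where G=G and G'=G and w="a + i"] unsettled
    show ?thesis unfolding Xind_eq by simp
  qed
  then have "X G s i = 0" if "s < \<tau>" for s
    using few[OF that] unfolding Xind_eq by simp
  moreover have "Z (isolate (a + i) G) s = Z G s" if "s \<le> \<tau>" for s
    using i few that by (intro zseq_isolate) auto
  ultimately show ?thesis using i by (intro history_isolate) auto
qed

lemma history_eq_iff_isolate:
  assumes i: "i \<in> {1..n-a}" and "1 \<le> \<tau>" and unsettled: "X G0 (\<tau> - 1) i = 0"
  shows "history G \<tau> i = history G0 \<tau> i \<longleftrightarrow>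
           history (isolate (a + i) G) \<tau> i = history G0 \<tau> i \<and> card {v \<in> set (Z G0 (\<tau> - 1)). adj G (a + i) v} < r"
proof
  assume eq: "history G \<tau> i = history G0 \<tau> i"
  then have "X G (\<tau> - 1) i = 0" "Z G (\<tau> - 1) = Z G0 (\<tau> - 1)"
    using history_eqD[OF eq] unsettled \<open>1 \<le> \<tau>\<close> by auto
  then show "history (isolate (a + i) G) \<tau> i = history G0 \<tau> i \<and> card {v \<in> set (Z G0 (\<tau> - 1)). adj G (a + i) v} < r"
    using history_isolate_unsettled[OF i \<open>1 \<le> \<tau>\<close>] eq unfolding Xind_eq by (simp add: not_le)
next
  assume "history (isolate (a + i) G) \<tau> i = history G0 \<tau> i \<and> card {v \<in> set (Z G0 (\<tau> - 1)). adj G (a + i) v} < r"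
  then have iso: "history (isolate (a + i) G) \<tau> i = history G0 \<tau> i"
    and few0: "card {v \<in> set (Z G0 (\<tau> - 1)). adj G (a + i) v} < r" by auto
  have zseq0: "Z (isolate (a + i) G) s = Z G0 s" if "s \<le> \<tau>" for s
    using history_eqD(1)[OF iso that] .
  have few: "card {v \<in> set (Z (isolate (a + i) G) s). adj G (a + i) v} < r" if "s < \<tau>" for s
  proof -
    have "s \<le> \<tau> - 1" using that by simp
    from card_explored_neighbours_mono[OF this, where G="isolate (a + i) G" and G'=G and w="a + i"]
    show ?thesis using few0 zseq0[of "\<tau> - 1"] by simp
  qed
  have zseq_eq: "Z (isolate (a + i) G) s = Z G s" if "s \<le> \<tau>" for s
  proof (rule zseq_isolate[OF _ _ that])
    show "card {v \<in> set (Z G s). adj G (a + i) v} < r" if "s < \<tau>" "Z (isolate (a + i) G) s = Z G s" for s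
      using few[OF that(1)] that(2) by simp
  qed (use i in auto)
  have "X G s i = 0" if "s < \<tau>" for s
    using few[OF that] zseq_eq[of s] that unfolding Xind_eq by simp
  then show "history G \<tau> i = history G0 \<tau> i"
    using history_isolate[of i \<tau> G] zseq_eq iso i by simp
qed

lemma Xind_eq_history:
  assumes "history G \<tau> i = history G0 \<tau> i"
  shows "X G \<tau> i = of_bool (r \<le> card {v \<in> set (Z G0 \<tau>). adj G (a + i) v})"
  using history_eqD(1)[OF assms, of \<tau>] unfolding Xind_eq by simp

lemma prob_history_eq_factor:
  assumes i: "i \<in> {1..n-a}" and "1 \<le> \<tau>" and unsettled: "X G0 (\<tau> - 1) i = 0"
  shows "measure_pmf.prob (gnp n p) {G. history G \<tau> i = history G0 \<tau> i \<and> Q (adj G (a + i))}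
       = measure_pmf.prob (edges_off n p (a + i)) {H. history H \<tau> i = history G0 \<tau> i}
         * measure_pmf.prob (edges_at n p (a + i))
             {K. card {v \<in> set (Z G0 (\<tau> - 1)). adj K (a + i) v} < r \<and> Q (adj K (a + i))}"
  unfolding gnp_eq_merge_graphs[of n p "a + i"]
proof (rule prob_map_pair_pmf_rectangle)
  fix H K assume HK: "H \<in> set_pmf (edges_off n p (a + i))" "K \<in> set_pmf (edges_at n p (a + i))"
  have "adj (merge_graphs n (a + i) (H, K)) (a + i) = adj K (a + i)"
    using isolate_merge_graphs(2)[OF HK] by (simp add: fun_eq_iff)
  then show "merge_graphs n (a + i) (H, K) \<in> {G. history G \<tau> i = history G0 \<tau> i \<and> Q (adj G (a + i))}
      \<longleftrightarrow> H \<in> {H. history H \<tau> i = history G0 \<tau> i}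
          \<and> K \<in> {K. card {v \<in> set (Z G0 (\<tau> - 1)). adj K (a + i) v} < r \<and> Q (adj K (a + i))}"
    using history_eq_iff_isolate[OF assms, of "merge_graphs n (a + i) (H, K)"] isolate_merge_graphs(1)[OF HK]
    by auto
qed

lemma not_mem_zseq_unsettled:
  assumes i: "i \<in> {1..n-a}" and "1 \<le> \<tau>" and unsettled: "X G (\<tau> - 1) i = 0"
  shows "a + i \<notin> set (Z G \<tau>)"
  using history_eqD(1)[OF history_isolate_unsettled[OF assms], of \<tau>] not_mem_zseq_isolate[of "a + i" G \<tau>] i
  by auto

lemma fiber_probabilities:
  assumes p: "0 \<le> p" "p \<le> 1" and i: "i \<in> {1..n-a}" and "1 \<le> \<tau>" and unsettled: "X G0 (\<tau> - 1) i = 0"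
  obtains \<beta> where "0 \<le> \<beta>"
    and "measure_pmf.prob (gnp n p) {G. history G \<tau> i = history G0 \<tau> i}
           = \<beta> * (1 - pihat p r (length (Z G0 (\<tau> - 1))))"
    and "measure_pmf.prob (gnp n p) {G. history G \<tau> i = history G0 \<tau> i \<and> X G \<tau> i = 1}
           = \<beta> * (pihat p r (length (Z G0 \<tau>)) - pihat p r (length (Z G0 (\<tau> - 1))))"
proof
  define w where "w = a + i"
  define S1 S2 where "S1 = set (Z G0 (\<tau> - 1))" and "S2 = set (Z G0 \<tau>)"
  let ?many = "\<lambda>S. {K. r \<le> card {v\<in>S. adj K w v}}"
  have "S1 \<subseteq> S2" unfolding S1_def S2_def by (rule set_zseq_mono) simp
  have "S2 \<subseteq> {1..n}" unfolding S2_def by (rule set_zseq_subset)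
  have "w \<notin> S2" unfolding S2_def w_def using not_mem_zseq_unsettled[OF i \<open>1 \<le> \<tau>\<close> unsettled] .
  have "w \<in> {1..n}" using i a_le_n by (auto simp: w_def)
  have many: "measure_pmf.prob (edges_at n p w) (?many S) = pihat p r (card S)" if "S \<subseteq> S2" for S
    using that \<open>S2 \<subseteq> {1..n}\<close> \<open>w \<notin> S2\<close> by (intro prob_edges_at_many_neighbours[OF p \<open>w \<in> {1..n}\<close>]) auto
  have "card S1 = length (Z G0 (\<tau> - 1))" "card S2 = length (Z G0 \<tau>)"
    unfolding S1_def S2_def by (simp_all add: distinct_card distinct_zseq)
  note factor = prob_history_eq_factor[OF i \<open>1 \<le> \<tau>\<close> unsettled, of p, folded w_def S1_def]
  define \<beta> where "\<beta> = measure_pmf.prob (edges_off n p w) {H. history H \<tau> i = history G0 \<tau> i}"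
  show "0 \<le> \<beta>" unfolding \<beta>_def by simp
  have "{K. card {v\<in>S1. adj K w v} < r} = UNIV - ?many S1" by auto
  moreover have "measure_pmf.prob (edges_at n p w) (UNIV - ?many S1) = 1 - pihat p r (card S1)"
    using measure_pmf.prob_compl[of "?many S1" "edges_at n p w"] many[OF \<open>S1 \<subseteq> S2\<close>] by simp
  ultimately show "measure_pmf.prob (gnp n p) {G. history G \<tau> i = history G0 \<tau> i}
           = \<beta> * (1 - pihat p r (length (Z G0 (\<tau> - 1))))"
    using factor[of "\<lambda>_. True"] \<open>card S1 = _\<close> by (simp add: \<beta>_def)
  have "X G \<tau> i = 1 \<longleftrightarrow> r \<le> card {v\<in>S2. adj G w v}" if "history G \<tau> i = history G0 \<tau> i" for G
    using Xind_eq_history[OF that] unfolding S2_def w_def by simp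
  then have "{G. history G \<tau> i = history G0 \<tau> i \<and> X G \<tau> i = 1}
      = {G. history G \<tau> i = history G0 \<tau> i \<and> r \<le> card {v\<in>S2. adj G w v}}" by blast
  moreover have "{K. card {v\<in>S1. adj K w v} < r \<and> r \<le> card {v\<in>S2. adj K w v}} = ?many S2 - ?many S1"
    by auto
  moreover have "card {v\<in>S1. adj K w v} \<le> card {v\<in>S2. adj K w v}" for K
    using \<open>S1 \<subseteq> S2\<close> \<open>S2 \<subseteq> {1..n}\<close> by (intro card_mono) (auto intro: finite_subset)
  then have "?many S1 \<subseteq> ?many S2" by (auto intro: order.trans)
  ultimately show "measure_pmf.prob (gnp n p) {G. history G \<tau> i = history G0 \<tau> i \<and> X G \<tau> i = 1}
           = \<beta> * (pihat p r (length (Z G0 \<tau>)) - pihat p r (length (Z G0 (\<tau> - 1))))"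
    using factor[of "\<lambda>A. r \<le> card {v\<in>S2. A v}"] many[OF \<open>S1 \<subseteq> S2\<close>] many[OF order.refl]
      \<open>card S1 = _\<close> \<open>card S2 = _\<close>
    by (simp add: \<beta>_def measure_pmf.finite_measure_Diff)
qed

definition normalized_Xind :: "real \<Rightarrow> graph \<Rightarrow> nat \<Rightarrow> nat \<Rightarrow> real" where
  "normalized_Xind p G s j = (X G s j - piproc n a r sel p G s) / (1 - piproc n a r sel p G s)"

definition mart_incr :: "real \<Rightarrow> graph \<Rightarrow> nat \<Rightarrow> nat \<Rightarrow> real" where
  "mart_incr p G s j = normalized_Xind p G s j - normalized_Xind p G (s - 1) j"

lemma mart_incr_adapted:
  assumes "history G \<tau> i = history G' \<tau> i" "1 \<le> s" "s < \<tau> \<or> (s = \<tau> \<and> j < i)"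
  shows "mart_incr p G s j = mart_incr p G' s j"
proof -
  have "s - 1 < \<tau>" using assms(2,3) by auto
  then have "Z G s = Z G' s" "Z G (s - 1) = Z G' (s - 1)" "X G s j = X G' s j" "X G (s - 1) j = X G' (s - 1) j"
    using history_eqD(1)[OF assms(1), of s] history_eqD(1)[OF assms(1), of "s - 1"]
      history_eqD(2)[OF assms(1), of s j] history_eqD(2)[OF assms(1), of "s - 1" j] assms(3) by auto
  then show ?thesis unfolding mart_incr_def normalized_Xind_def piproc_eq_pihat_length by simp
qed

lemma abs_mart_incr_le:
  assumes "0 \<le> p" "p < 1" and "1 \<le> \<tau>" "\<tau> \<le> t"
  shows "\<bar>mart_incr p G \<tau> i\<bar> \<le> 1 / (1 - pihat p r t) ^ 3"
proof -
  have "length (Z G (\<tau> - 1)) \<le> t" "length (Z G \<tau>) \<le> t"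
    using length_zseq_le[of G "\<tau> - 1"] length_zseq_le[of G \<tau>] assms by auto
  then show ?thesis
    unfolding mart_incr_def normalized_Xind_def piproc_eq_pihat_length
    using assms pihat_nonneg pihat_mono pihat_less_1 r_pos Xind_cases Xind_mono[of "\<tau> - 1" \<tau> G i]
    by (intro normalized_indicator_diff_bound) auto
qed

lemma mart_incr_on_fiber:
  assumes "history G \<tau> i = history G0 \<tau> i" "1 \<le> \<tau>"
  shows "mart_incr p G \<tau> i
    = (X G \<tau> i - pihat p r (length (Z G0 \<tau>))) / (1 - pihat p r (length (Z G0 \<tau>)))
      - (X G0 (\<tau> - 1) i - pihat p r (length (Z G0 (\<tau> - 1)))) / (1 - pihat p r (length (Z G0 (\<tau> - 1))))"
  using history_eqD(1)[OF assms(1), of \<tau>] history_eqD(1)[OF assms(1), of "\<tau> - 1"]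
    history_eqD(2)[OF assms(1), of "\<tau> - 1" i] assms(2)
  unfolding mart_incr_def normalized_Xind_def piproc_eq_pihat_length by simp

lemma mart_incr_settled:
  assumes "0 \<le> p" "p < 1" and "X G (\<tau> - 1) i = 1"
  shows "mart_incr p G \<tau> i = 0"
proof -
  have "X G \<tau> i = 1" using Xind_mono[of "\<tau> - 1" \<tau> G i] Xind_cases[of G \<tau> i] assms(3) by auto
  moreover have "pihat p r m \<noteq> 1" for m using pihat_less_1[of p r m] assms(1,2) r_pos by simp
  ultimately show ?thesis
    using assms(3) unfolding mart_incr_def normalized_Xind_def piproc_eq_pihat_length by simp
qed

lemma pihat_length_zseq_diff_le:
  assumes "0 \<le> p" "p \<le> 1"
  shows "pihat p r (length (Z G \<tau>)) - pihat p r (length (Z G (\<tau> - 1))) \<le> pihat p r \<tau> - pihat p r (\<tau> - 1)"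
proof (cases "\<tau> \<le> Tstop n a r sel G")
  case False
  then show ?thesis using pihat_mono[OF assms, of "\<tau> - 1" \<tau> r] by (simp add: length_zseq)
qed (simp add: length_zseq)

lemma fiber_moments_unsettled:
  assumes p: "0 < p" "p < 1" and "1 \<le> \<tau>" "\<tau> \<le> t" and i: "i \<in> {1..n-a}"
    and unsettled: "X G0 (\<tau> - 1) i = 0"
  defines "F \<equiv> {G\<in>set_pmf (gnp n p). history G \<tau> i = history G0 \<tau> i}"
  shows "(\<Sum>G\<in>F. pmf (gnp n p) G * mart_incr p G \<tau> i) = 0"
    and "(\<Sum>G\<in>F. pmf (gnp n p) G * (mart_incr p G \<tau> i)\<^sup>2)
           \<le> (pihat p r \<tau> - pihat p r (\<tau> - 1)) / (1 - pihat p r t) ^ 3 * (\<Sum>G\<in>F. pmf (gnp n p) G)"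
proof -
  define c1 c2 c where "c1 = pihat p r (length (Z G0 (\<tau> - 1)))"
    and "c2 = pihat p r (length (Z G0 \<tau>))" and "c = pihat p r t"
  define u d where "u = 1 / (1 - c2)" and "d = c1 / (1 - c1) - c2 / (1 - c2)"
  let ?w = "pmf (gnp n p)"
  have "finite F" unfolding F_def using finite_set_pmf_gnp by simp
  have X01: "X G \<tau> i \<in> {0, 1}" for G using Xind_cases by simp
  have "length (Z G0 (\<tau> - 1)) \<le> length (Z G0 \<tau>)" "length (Z G0 \<tau>) \<le> t"
    using length_zseq_mono[of "\<tau> - 1" \<tau> G0] length_zseq_le[of G0 \<tau>] \<open>\<tau> \<le> t\<close> by auto
  then have c: "0 \<le> c1" "c1 \<le> c2" "c2 \<le> c" "c < 1"
    unfolding c1_def c2_def c_def using p pihat_nonneg pihat_mono pihat_less_1 r_pos by auto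
  have incr: "mart_incr p G \<tau> i = X G \<tau> i * u + d" if "G \<in> F" for G
    using mart_incr_on_fiber[of G \<tau> i G0 p] that \<open>1 \<le> \<tau>\<close> unsettled
    unfolding F_def c1_def[symmetric] c2_def[symmetric] u_def d_def by (simp add: diff_divide_distrib)
  have incr2: "(mart_incr p G \<tau> i)\<^sup>2 = X G \<tau> i * (u\<^sup>2 + 2 * u * d) + d\<^sup>2" if "G \<in> F" for G
    using incr[OF that] X01[of G] by (auto simp: power2_eq_square algebra_simps)
  obtain \<beta> where "0 \<le> \<beta>"
    and "measure_pmf.prob (gnp n p) {G. history G \<tau> i = history G0 \<tau> i} = \<beta> * (1 - c1)"
    and "measure_pmf.prob (gnp n p) {G. history G \<tau> i = history G0 \<tau> i \<and> X G \<tau> i = 1} = \<beta> * (c2 - c1)"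
    using fiber_probabilities[OF less_imp_le[OF p(1)] less_imp_le[OF p(2)] i \<open>1 \<le> \<tau>\<close> unsettled]
    unfolding c1_def c2_def by blast
  moreover have "{G\<in>F. X G \<tau> i = 1} = {G\<in>set_pmf (gnp n p). history G \<tau> i = history G0 \<tau> i \<and> X G \<tau> i = 1}"
    unfolding F_def by auto
  ultimately have total: "(\<Sum>G\<in>F. ?w G) = \<beta> * (1 - c1)"
    and ones: "(\<Sum>G\<in>{G\<in>F. X G \<tau> i = 1}. ?w G) = \<beta> * (c2 - c1)"
    unfolding F_def by (simp_all add: sum_pmf_gnp)
  have "(\<Sum>G\<in>F. ?w G * mart_incr p G \<tau> i) = \<beta> * (c2 - c1) * u + \<beta> * (1 - c1) * d"
    using sum_affine_indicator[OF \<open>finite F\<close> X01, where f="?w" and c=u and d=d] incr total ones by simp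
  then show "(\<Sum>G\<in>F. ?w G * mart_incr p G \<tau> i) = 0"
    unfolding u_def d_def using unsettled_incr_mean_eq_0 c by simp
  have "(\<Sum>G\<in>F. ?w G * (mart_incr p G \<tau> i)\<^sup>2) = \<beta> * (c2 - c1) * (u\<^sup>2 + 2 * u * d) + \<beta> * (1 - c1) * d\<^sup>2"
    using sum_affine_indicator[OF \<open>finite F\<close> X01, where f="?w" and c="u\<^sup>2 + 2 * u * d" and d="d\<^sup>2"] incr2 total ones by simp
  also have "\<dots> \<le> (c2 - c1) / (1 - c) ^ 3 * (\<Sum>G\<in>F. ?w G)"
    unfolding total u_def d_def using unsettled_incr_var_le[OF \<open>0 \<le> \<beta>\<close> c] .
  also have "\<dots> \<le> (pihat p r \<tau> - pihat p r (\<tau> - 1)) / (1 - pihat p r t) ^ 3 * (\<Sum>G\<in>F. ?w G)"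
  proof (intro mult_right_mono sum_nonneg)
    show "(c2 - c1) / (1 - c) ^ 3 \<le> (pihat p r \<tau> - pihat p r (\<tau> - 1)) / (1 - pihat p r t) ^ 3"
      using pihat_length_zseq_diff_le[of p G0 \<tau>] p c unfolding c1_def c2_def c_def
      by (intro divide_right_mono) auto
  qed simp
  finally show "(\<Sum>G\<in>F. ?w G * (mart_incr p G \<tau> i)\<^sup>2)
           \<le> (pihat p r \<tau> - pihat p r (\<tau> - 1)) / (1 - pihat p r t) ^ 3 * (\<Sum>G\<in>F. ?w G)" .
qed

lemma fiber_moments:
  fixes y :: "(nat \<Rightarrow> nat list) \<times> (nat \<Rightarrow> nat \<Rightarrow> real)"
  assumes p: "0 < p" "p < 1" and \<tau>: "1 \<le> \<tau>" "\<tau> \<le> t" and i: "i \<in> {1..n-a}"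
  defines "F \<equiv> {G\<in>set_pmf (gnp n p). history G \<tau> i = y}"
  shows "(\<Sum>G\<in>F. pmf (gnp n p) G * mart_incr p G \<tau> i) = 0"
    and "(\<Sum>G\<in>F. pmf (gnp n p) G * (mart_incr p G \<tau> i)\<^sup>2)
           \<le> (pihat p r \<tau> - pihat p r (\<tau> - 1)) / (1 - pihat p r t) ^ 3 * (\<Sum>G\<in>F. pmf (gnp n p) G)"
proof -
  have "0 \<le> (pihat p r \<tau> - pihat p r (\<tau> - 1)) / (1 - pihat p r t) ^ 3"
    using pihat_mono[of p "\<tau> - 1" \<tau> r] pihat_less_1[of p r t] p r_pos by simp
  then have settled_case: "(\<Sum>G\<in>F. pmf (gnp n p) G * mart_incr p G \<tau> i) = 0 \<and>
      (\<Sum>G\<in>F. pmf (gnp n p) G * (mart_incr p G \<tau> i)\<^sup>2)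
           \<le> (pihat p r \<tau> - pihat p r (\<tau> - 1)) / (1 - pihat p r t) ^ 3 * (\<Sum>G\<in>F. pmf (gnp n p) G)"
    if "\<And>G. G \<in> F \<Longrightarrow> mart_incr p G \<tau> i = 0"
    using that mult_nonneg_nonneg[OF \<open>0 \<le> _\<close> sum_nonneg[of F "pmf (gnp n p)"]] by simp
  have "(\<Sum>G\<in>F. pmf (gnp n p) G * mart_incr p G \<tau> i) = 0 \<and>
      (\<Sum>G\<in>F. pmf (gnp n p) G * (mart_incr p G \<tau> i)\<^sup>2)
           \<le> (pihat p r \<tau> - pihat p r (\<tau> - 1)) / (1 - pihat p r t) ^ 3 * (\<Sum>G\<in>F. pmf (gnp n p) G)"
  proof (cases "F = {}")
    case False
    then obtain G0 where "G0 \<in> F" by blast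
    then have F: "F = {G\<in>set_pmf (gnp n p). history G \<tau> i = history G0 \<tau> i}" unfolding F_def by auto
    consider "X G0 (\<tau> - 1) i = 1" | "X G0 (\<tau> - 1) i = 0" using Xind_cases by blast
    then show ?thesis
    proof cases
      case 1
      have "X G (\<tau> - 1) i = 1" if "G \<in> F" for G
        using history_eqD(2)[of G \<tau> i G0 "\<tau> - 1" i] that 1 \<tau> unfolding F by simp
      then have "mart_incr p G \<tau> i = 0" if "G \<in> F" for G
        using mart_incr_settled[of p G \<tau> i] p that by simp
      then show ?thesis by (rule settled_case)
    next
      case 2
      then show ?thesis unfolding F using fiber_moments_unsettled[OF p \<tau> i] by simp
    qed
  qed (use settled_case in simp)
  then show "(\<Sum>G\<in>F. pmf (gnp n p) G * mart_incr p G \<tau> i) = 0"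
    and "(\<Sum>G\<in>F. pmf (gnp n p) G * (mart_incr p G \<tau> i)\<^sup>2)
           \<le> (pihat p r \<tau> - pihat p r (\<tau> - 1)) / (1 - pihat p r t) ^ 3 * (\<Sum>G\<in>F. pmf (gnp n p) G)"
    by auto
qed

definition round_incr :: "real \<Rightarrow> graph \<Rightarrow> nat \<Rightarrow> real" where
  "round_incr p G l = case_prod (mart_incr p G) (round_of (n - a) l)"

lemma normalized_Xind_0: "0 \<le> p \<Longrightarrow> p \<le> 1 \<Longrightarrow> normalized_Xind p G 0 j = 0"
  unfolding normalized_Xind_def piproc_eq_pihat_length using Xind_0 pihat_zero r_pos by simp

lemma sum_round_incr_steps:
  assumes "0 \<le> p" "p \<le> 1"
  shows "(\<Sum>l = 1..s * (n - a). round_incr p G l) = (\<Sum>j = 1..n - a. normalized_Xind p G s j)"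
proof (induction s)
  case 0
  then show ?case using normalized_Xind_0[OF assms] by simp
next
  case (Suc s)
  let ?N = "n - a"
  have "(\<Sum>l = 1..Suc s * ?N. round_incr p G l)
     = (\<Sum>l = 1..s * ?N. round_incr p G l) + (\<Sum>l = s * ?N + 1..s * ?N + ?N. round_incr p G l)"
    using sum.ub_add_nat[of 1 "s * ?N" _ ?N] by (simp add: add.commute)
  also have "(\<Sum>l = s * ?N + 1..s * ?N + ?N. round_incr p G l) = (\<Sum>j = 1..?N. mart_incr p G (Suc s) j)"
    using sum_round_of_block[of ?N ?N "case_prod (mart_incr p G)" s] by (simp add: round_incr_def)
  finally show ?case
    using Suc by (simp add: mart_incr_def sum_subtractf)
qed

lemma sum_round_incr_eq_Mart:
  assumes "0 \<le> p" "p \<le> 1" and "1 \<le> \<tau>" "1 \<le> i" "i \<le> n - a"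
  shows "(\<Sum>l = 1..(\<tau> - 1) * (n - a) + i. round_incr p G l) = Mart n a r sel p G \<tau> i"
proof -
  let ?N = "n - a" and ?g = "normalized_Xind p G"
  have "(\<Sum>l = 1..(\<tau> - 1) * ?N + i. round_incr p G l)
     = (\<Sum>l = 1..(\<tau> - 1) * ?N. round_incr p G l) + (\<Sum>l = (\<tau> - 1) * ?N + 1..(\<tau> - 1) * ?N + i. round_incr p G l)"
    by (rule sum.ub_add_nat) simp
  also have "(\<Sum>l = (\<tau> - 1) * ?N + 1..(\<tau> - 1) * ?N + i. round_incr p G l) = (\<Sum>j = 1..i. mart_incr p G \<tau> j)"
    using sum_round_of_block[of i ?N "case_prod (mart_incr p G)" "\<tau> - 1"] assms by (simp add: round_incr_def)
  also have "\<dots> = (\<Sum>j = 1..i. ?g \<tau> j) - (\<Sum>j = 1..i. ?g (\<tau> - 1) j)"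
    by (simp add: mart_incr_def sum_subtractf)
  also have "(\<Sum>l = 1..(\<tau> - 1) * ?N. round_incr p G l) = (\<Sum>j = 1..?N. ?g (\<tau> - 1) j)"
    by (rule sum_round_incr_steps[OF assms(1,2)])
  also have "\<dots> = (\<Sum>j = 1..i. ?g (\<tau> - 1) j) + (\<Sum>j = i + 1..i + (?N - i). ?g (\<tau> - 1) j)"
    using sum.ub_add_nat[of 1 i "?g (\<tau> - 1)" "?N - i"] assms by simp
  finally show ?thesis unfolding Mart_def normalized_Xind_def using assms by simp
qed

lemma Mart_initial: "0 \<le> p \<Longrightarrow> p \<le> 1 \<Longrightarrow> Mart n a r sel p G 0 (n - a) = 0"
  unfolding Mart_def piproc_eq_pihat_length using Xind_0 pihat_zero r_pos by simp

lemma Mart_reached_within_rounds: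
  assumes "0 \<le> p" "p \<le> 1" and "0 < lam" and "round_in n a t \<tau> i"
    and reached: "lam \<le> \<sigma> * Mart n a r sel p G \<tau> i"
  shows "\<exists>m\<in>{1..t * (n - a)}. lam \<le> (\<Sum>l=1..m. \<sigma> * round_incr p G l)"
proof -
  have "\<not> (\<tau> = 0 \<and> i = n - a)" using reached \<open>0 < lam\<close> Mart_initial[OF assms(1,2), of G] by auto
  then have "1 \<le> \<tau>" "\<tau> \<le> t" "1 \<le> i" "i \<le> n - a"
    using \<open>round_in n a t \<tau> i\<close> unfolding round_in_def by auto
  have "(\<tau> - 1) * (n - a) + i \<le> (\<tau> - 1) * (n - a) + (n - a)" using \<open>i \<le> n - a\<close> by simp
  also have "\<dots> = \<tau> * (n - a)" using \<open>1 \<le> \<tau>\<close> by (cases \<tau>) auto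
  also have "\<dots> \<le> t * (n - a)" using \<open>\<tau> \<le> t\<close> by simp
  finally have "(\<tau> - 1) * (n - a) + i \<in> {1..t * (n - a)}" using \<open>1 \<le> i\<close> by simp
  moreover have "(\<Sum>l=1..(\<tau> - 1) * (n - a) + i. \<sigma> * round_incr p G l) = \<sigma> * Mart n a r sel p G \<tau> i"
    using sum_round_incr_eq_Mart[OF assms(1,2) \<open>1 \<le> \<tau>\<close> \<open>1 \<le> i\<close> \<open>i \<le> n - a\<close>]
    by (simp only: sum_distrib_left[symmetric])
  ultimately show ?thesis using reached by (intro bexI[of _ "(\<tau> - 1) * (n - a) + i"]) simp_all
qed

definition round_var_bound :: "real \<Rightarrow> nat \<Rightarrow> nat \<Rightarrow> real" where
  "round_var_bound p t k = (pihat p r (fst (round_of (n - a) k)) - pihat p r (fst (round_of (n - a) k) - 1))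
                           / (1 - pihat p r t) ^ 3"

lemma sum_round_var_bound:
  assumes "0 \<le> p" "p \<le> 1"
  shows "(\<Sum>k=1..t * (n - a). round_var_bound p t k) = real (n - a) * pihat p r t / (1 - pihat p r t) ^ 3"
  using sum_round_of_diff[where f="pihat p r" and s=t and N="n - a"] pihat_zero[OF assms r_pos]
  unfolding round_var_bound_def by (simp add: sum_divide_distrib[symmetric])

lemma weighted_martingale_round_incr:
  assumes p: "0 < p" "p < 1" and \<sigma>: "\<sigma> \<in> {1, -1}"
  shows "weighted_martingale (set_pmf (gnp n p)) (pmf (gnp n p)) (t * (n - a))
           (\<lambda>k G. case_prod (history G) (round_of (n - a) k)) (\<lambda>k G. \<sigma> * round_incr p G k)
           (round_var_bound p t) (1 / (1 - pihat p r t) ^ 3)"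
proof
  define N where "N = n - a"
  have round: "1 \<le> fst (round_of N k)" "fst (round_of N k) \<le> t" "snd (round_of N k) \<in> {1..n - a}"
    if "k \<in> {1..t * (n - a)}" for k using round_of_range[of k t N] that unfolding N_def by auto
  have "pihat p r t < 1" using pihat_less_1 p r_pos by simp
  show "finite (set_pmf (gnp n p))" by (rule finite_set_pmf_gnp)
  show "0 \<le> pmf (gnp n p) G" for G by simp
  show "\<sigma> * round_incr p G l = \<sigma> * round_incr p G' l"
    if "k \<in> {1..t * (n - a)}" "1 \<le> l" "l < k"
      "case_prod (history G) (round_of (n - a) k) = case_prod (history G') (round_of (n - a) k)" for k l G G'
    using mart_incr_adapted[of G _ _ G' "fst (round_of N l)" "snd (round_of N l)" p] that round_of_less[of l k N]
    unfolding round_incr_def N_def by (cases "round_of (n - a) k") (auto simp: round_of_def)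
  show "\<sigma> * round_incr p G k \<le> 1 / (1 - pihat p r t) ^ 3" if "k \<in> {1..t * (n - a)}" for k G
    using abs_mart_incr_le[of p "fst (round_of N k)" t G "snd (round_of N k)"] p round[OF that] \<sigma>
    unfolding round_incr_def N_def[symmetric] by (cases "round_of N k") (auto simp: abs_le_iff)
  show "0 \<le> round_var_bound p t k" for k
    using pihat_mono[of p "fst (round_of N k) - 1" "fst (round_of N k)" r] p \<open>pihat p r t < 1\<close>
    by (simp add: round_var_bound_def N_def)
  show "0 < 1 / (1 - pihat p r t) ^ 3" using \<open>pihat p r t < 1\<close> by simp
  fix k y assume "k \<in> {1..t * (n - a)}"
  obtain \<tau> i where ri: "round_of N k = (\<tau>, i)" by fastforce
  have fiber: "{G\<in>set_pmf (gnp n p). case_prod (history G) (round_of (n - a) k) = y}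
      = {G\<in>set_pmf (gnp n p). history G \<tau> i = y}"
    using ri by (simp add: N_def)
  have incr: "\<sigma> * round_incr p G k = \<sigma> * mart_incr p G \<tau> i"
      "(\<sigma> * round_incr p G k)\<^sup>2 = (mart_incr p G \<tau> i)\<^sup>2" for G
    using \<sigma> ri by (auto simp: round_incr_def N_def power_mult_distrib)
  note moments = fiber_moments[OF p round[OF \<open>k \<in> _\<close>, unfolded ri fst_conv snd_conv], of y]
  show "(\<Sum>G\<in>{G\<in>set_pmf (gnp n p). case_prod (history G) (round_of (n - a) k) = y}.
          pmf (gnp n p) G * (\<sigma> * round_incr p G k)) = 0"
    using moments(1) unfolding fiber incr(1) by (simp add: sum_distrib_left[symmetric] mult.left_commute)
  show "(\<Sum>G\<in>{G\<in>set_pmf (gnp n p). case_prod (history G) (round_of (n - a) k) = y}.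
          pmf (gnp n p) G * (\<sigma> * round_incr p G k)\<^sup>2)
        \<le> round_var_bound p t k *
          (\<Sum>G\<in>{G\<in>set_pmf (gnp n p). case_prod (history G) (round_of (n - a) k) = y}. pmf (gnp n p) G)"
    using moments(2) unfolding fiber incr(2) round_var_bound_def N_def[symmetric] ri by simp
qed

lemma prob_Mart_reaches_le:
  assumes p: "0 < p" "p < 1" and "0 < lam" and \<sigma>: "\<sigma> \<in> {1, -1}"
  shows "measure_pmf.prob (gnp n p) {G. \<exists>\<tau> i. round_in n a t \<tau> i \<and> lam \<le> \<sigma> * Mart n a r sel p G \<tau> i}
    \<le> exp (- (lam\<^sup>2 * (1 - pihat p r t) ^ 3) / (2 * (real n * pihat p r t + lam / 3)))"
proof -
  interpret weighted_martingale "set_pmf (gnp n p)" "pmf (gnp n p)" "t * (n - a)"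
      "\<lambda>k G. case_prod (history G) (round_of (n - a) k)" "\<lambda>k G. \<sigma> * round_incr p G k"
      "round_var_bound p t" "1 / (1 - pihat p r t) ^ 3"
    using p \<sigma> by (rule weighted_martingale_round_incr)
  define c where "c = pihat p r t"
  have "0 \<le> c" "c < 1" unfolding c_def using pihat_nonneg pihat_less_1 p r_pos by auto
  let ?reached = "{G\<in>set_pmf (gnp n p). \<exists>m\<in>{1..t * (n - a)}. lam \<le> (\<Sum>l=1..m. \<sigma> * round_incr p G l)}"
  have "measure_pmf.prob (gnp n p) {G. \<exists>\<tau> i. round_in n a t \<tau> i \<and> lam \<le> \<sigma> * Mart n a r sel p G \<tau> i}
      = (\<Sum>G\<in>{G\<in>set_pmf (gnp n p). \<exists>\<tau> i. round_in n a t \<tau> i \<and> lam \<le> \<sigma> * Mart n a r sel p G \<tau> i}. pmf (gnp n p) G)"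
    by (rule sum_pmf_gnp[symmetric])
  also have "\<dots> \<le> (\<Sum>G\<in>?reached. pmf (gnp n p) G)"
    using Mart_reached_within_rounds[OF less_imp_le[OF p(1)] less_imp_le[OF p(2)] \<open>0 < lam\<close>]
    by (intro sum_mono2) (auto simp: finite_set_pmf_gnp)
  also have "\<dots> \<le> exp (- lam\<^sup>2 / (2 * (real (n - a) * c / (1 - c) ^ 3 + 1 / (1 - c) ^ 3 * lam / 3)))"
    using freedman_inequality[OF \<open>0 < lam\<close>] sum_round_var_bound[of p t] sum_pmf_gnp[of n p "\<lambda>_. True"] p
    unfolding c_def by simp
  also have "\<dots> \<le> exp (- (lam\<^sup>2 * (1 - c) ^ 3) / (2 * (real n * c + lam / 3)))"
    using \<open>0 \<le> c\<close> \<open>c < 1\<close> \<open>0 < lam\<close> by (intro bernstein_exponent_le) auto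
  finally show ?thesis unfolding c_def .
qed

end

theorem lemma2:
  fixes n a r t :: nat and p lam :: real
    and sel :: "nat list \<Rightarrow> nat set \<Rightarrow> nat"
  assumes "r \<ge> 2" and "0 < p" and "p < 1" and "a \<le> n"
    and "\<And>xs S. finite S \<Longrightarrow> S \<noteq> {} \<Longrightarrow> sel xs S \<in> S"
    and "t \<le> n" and "lam > 0"
  shows "measure_pmf.prob (gnp n p)
           {G. \<forall>\<tau> i. round_in n a t \<tau> i \<longrightarrow> Mart n a r sel p G \<tau> i > - lam}
         \<ge> 1 - exp (- (lam\<^sup>2 * (1 - pihat p r t) ^ 3) / (2 * (real n * pihat p r t + lam / 3)))
       \<and> measure_pmf.prob (gnp n p)
           {G. \<forall>\<tau> i. round_in n a t \<tau> i \<longrightarrow> Mart n a r sel p G \<tau> i < lam}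
         \<ge> 1 - exp (- (lam\<^sup>2 * (1 - pihat p r t) ^ 3) / (2 * (real n * pihat p r t + lam / 3)))"
proof -
  interpret exploration n a r sel
    using assms by unfold_locales auto
  have prob_compl: "measure_pmf.prob (gnp n p) (UNIV - A) = 1 - measure_pmf.prob (gnp n p) A" for A
    using measure_pmf.prob_compl[of A "gnp n p"] by simp
  have "- lam < M \<longleftrightarrow> \<not> lam \<le> (-1) * M" "M < lam \<longleftrightarrow> \<not> lam \<le> 1 * M" for M :: real
    by auto
  then have "{G. \<forall>\<tau> i. round_in n a t \<tau> i \<longrightarrow> Mart n a r sel p G \<tau> i > - lam}
      = UNIV - {G. \<exists>\<tau> i. round_in n a t \<tau> i \<and> lam \<le> (-1) * Mart n a r sel p G \<tau> i}"
    and "{G. \<forall>\<tau> i. round_in n a t \<tau> i \<longrightarrow> Mart n a r sel p G \<tau> i < lam}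
      = UNIV - {G. \<exists>\<tau> i. round_in n a t \<tau> i \<and> lam \<le> 1 * Mart n a r sel p G \<tau> i}"
    by (simp_all only:) blast+
  then show ?thesis
    using prob_Mart_reaches_le[of p lam 1 t] prob_Mart_reaches_le[of p lam "-1" t] assms
    by (simp add: prob_compl)
qed

end
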